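(* Assume $(\hat A,\hat B)=(A_\star,B_\star)$ (exact model), that $m\le n$, $R\succeq I$, $Q\succeq I$, $(A_\star,B_\star)$ is stabilizable, and that $\|A_\star\|,\|B_\star\|,\|P_\star\|\le\Upsilon_\star$ for a constant $\Upsilon_\star\ge\max\{1,\varepsilon_\mathrm{m}\}$, where $\varepsilon_\mathrm{m}\ge 0$. Let $N\ge1$ be an integer and $P\in\mathbb{S}^n_+$ with $\|P-P_\star\|\le\varepsilon_\mathrm{p}$. Let $K_\mathrm{mpc}=\mathcal{K}_{A_\star,B_\star}\big(\mathcal{R}^{(N-1)}_{A_\star,B_\star}(P)\big)$. If $\Upsilon_\star\ge\beta_\star(1-\beta_\star^{-1})^{N-1}\varepsilon_\mathrm{p}$ and $\varepsilon_\mathrm{m}+\beta_\star(1-\beta_\star^{-1})^{N-1}\varepsilon_\mathrm{p}\le \underline{\sigma}(R)/(40\Upsilon_\star^4\|P_\star\|^{3/2})$, then $A_\star-B_\star K_\mathrm{mpc}$ is Schur stable and $$J_{K_\mathrm{mpc}}-J_{K_\star}\le 32\,m\,\sigma_w^2\,\Upsilon_\star^4(\sqrt{\|P_\star\|}+1)^2\|P_\star\|(\overline{\sigma}(R)+\Upsilon_\star^3)\,\beta_\star^2(1-\beta_\star^{-1})^{2(N-1)}\varepsilon_\mathrm{p}^2.$$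
   Context: True system: $x_{t+1}=A_\star x_t+B_\star u_t+w_t$, $x_t\in\mathbb{R}^n,u_t\in\mathbb{R}^m$, $w_t$ white noise with $\mathbb{E}(w_tw_t^\top)=\sigma_w^2I$, $x_0$ zero-mean with covariance $\sigma_x^2 I$ uncorrelated with the noise. Weights $Q\in\mathbb{S}^n_+$, $R\in\mathbb{S}^m_{++}$. $\|\cdot\|$ is the spectral norm; $\overline{\sigma},\underline{\sigma}$ are largest/smallest singular values. $S_B=BR^{-1}B^\top$; Riccati map $\mathcal{R}_{A,B}(P)=A^\top P(I+S_BP)^{-1}A+Q$ on $\mathbb{S}^n_+$, iterates $\mathcal{R}^{(0)}_{A,B}=\mathrm{id}$, $\mathcal{R}^{(i+1)}_{A,B}=\mathcal{R}_{A,B}\circ\mathcal{R}^{(i)}_{A,B}$. $\mathcal{K}_{A,B}(F)=(R+B^\top FB)^{-1}B^\top FA$. $P_\star$ is the unique positive definite solution of $P_\star=\mathcal{R}_{A_\star,B_\star}(P_\star)$, $K_\star=\mathcal{K}_{A_\star,B_\star}(P_\star)$, and $\beta_\star=\overline{\sigma}(P_\star)/\underline{\sigma}(Q)$. For a static gain $K$ with $\rho(A_\star-B_\star K)<1$, $J_K=\lim_{T\to\infty}\frac1T\mathbb{E}\big[\sum_{t=0}^{T-1}(x_t^\top Qx_t+u_t^\top Ru_t)\big]$ under $u_t=-Kx_t$. The gain $K_\mathrm{mpc}$ is the static feedback equivalent to the receding-horizon LQ controller with horizon $N$, terminal cost $x^\top Px$ and prediction model $(\hat A,\hat B)$. *)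

theory Defs
  imports "HOL-Analysis.Analysis" "HOL-Probability.Probability"
begin

definition specnorm :: "real^'c^'r \<Rightarrow> real" where
  "specnorm A = onorm (\<lambda>x. A *v x)"

definition smin :: "real^'c^'r \<Rightarrow> real" where
  "smin A = Inf {norm (A *v x) | x. norm x = 1}"

definition psd :: "real^'n^'n \<Rightarrow> bool" where
  "psd M \<longleftrightarrow> transpose M = M \<and> (\<forall>x. 0 \<le> x \<bullet> (M *v x))"

definition pd :: "real^'n^'n \<Rightarrow> bool" where
  "pd M \<longleftrightarrow> transpose M = M \<and> (\<forall>x. x \<noteq> 0 \<longrightarrow> 0 < x \<bullet> (M *v x))"

text \<open>Complexification of a real matrix; Schur stability = spectral radius < 1,
  i.e. every (complex) eigenvalue has modulus < 1.\<close>
definition cmat :: "real^'n^'n \<Rightarrow> complex^'n^'n" where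
  "cmat A = (\<chi> i j. complex_of_real (A $ i $ j))"

definition schur_stable :: "real^'n^'n \<Rightarrow> bool" where
  "schur_stable A \<longleftrightarrow> (\<forall>(c::complex) v. v \<noteq> 0 \<and> cmat A *v v = c *s v \<longrightarrow> cmod c < 1)"

definition stabilizable :: "real^'n^'n \<Rightarrow> real^'m^'n \<Rightarrow> bool" where
  "stabilizable A B \<longleftrightarrow> (\<exists>K :: real^'n^'m. schur_stable (A - B ** K))"

definition riccati :: "real^'n^'n \<Rightarrow> real^'m^'n \<Rightarrow> real^'n^'n \<Rightarrow> real^'m^'m
    \<Rightarrow> real^'n^'n \<Rightarrow> real^'n^'n" where
  "riccati A B Q R P =
     transpose A ** P ** matrix_inv (mat 1 + B ** matrix_inv R ** transpose B ** P) ** A + Q"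

definition gainK :: "real^'n^'n \<Rightarrow> real^'m^'n \<Rightarrow> real^'m^'m \<Rightarrow> real^'n^'n \<Rightarrow> real^'n^'m" where
  "gainK A B R F = matrix_inv (R + transpose B ** F ** B) ** transpose B ** F ** A"

definition noise_model :: "'a measure \<Rightarrow> real \<Rightarrow> real \<Rightarrow> ('a \<Rightarrow> real^'n)
    \<Rightarrow> (nat \<Rightarrow> 'a \<Rightarrow> real^'n) \<Rightarrow> bool" where
  "noise_model M sw sx x0 w \<longleftrightarrow>
     prob_space M \<and>
     x0 \<in> borel_measurable M \<and> (\<forall>t. w t \<in> borel_measurable M) \<and>
     (\<forall>i. integrable M (\<lambda>\<omega>. (x0 \<omega> $ i)^2)) \<and>
     (\<forall>t i. integrable M (\<lambda>\<omega>. (w t \<omega> $ i)^2)) \<and>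
     (\<forall>i. integral\<^sup>L M (\<lambda>\<omega>. x0 \<omega> $ i) = 0) \<and>
     (\<forall>t i. integral\<^sup>L M (\<lambda>\<omega>. w t \<omega> $ i) = 0) \<and>
     (\<forall>t s i j. integral\<^sup>L M (\<lambda>\<omega>. w t \<omega> $ i * w s \<omega> $ j)
                 = (if t = s \<and> i = j then sw^2 else 0)) \<and>
     (\<forall>i j. integral\<^sup>L M (\<lambda>\<omega>. x0 \<omega> $ i * x0 \<omega> $ j) = (if i = j then sx^2 else 0)) \<and>
     (\<forall>t i j. integral\<^sup>L M (\<lambda>\<omega>. x0 \<omega> $ i * w t \<omega> $ j) = 0)"

primrec clx :: "real^'n^'n \<Rightarrow> real^'m^'n \<Rightarrow> real^'n^'m \<Rightarrow> ('a \<Rightarrow> real^'n)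
    \<Rightarrow> (nat \<Rightarrow> 'a \<Rightarrow> real^'n) \<Rightarrow> nat \<Rightarrow> 'a \<Rightarrow> real^'n" where
  "clx A B K x0 w 0 = x0"
| "clx A B K x0 w (Suc t) =
     (\<lambda>\<omega>. A *v clx A B K x0 w t \<omega> + B *v (- (K *v clx A B K x0 w t \<omega>)) + w t \<omega>)"

definition lqr_cost :: "'a measure \<Rightarrow> real^'n^'n \<Rightarrow> real^'m^'n \<Rightarrow> real^'n^'n \<Rightarrow> real^'m^'m
    \<Rightarrow> ('a \<Rightarrow> real^'n) \<Rightarrow> (nat \<Rightarrow> 'a \<Rightarrow> real^'n) \<Rightarrow> real^'n^'m \<Rightarrow> real" where
  "lqr_cost M A B Q R x0 w K =
     lim (\<lambda>T. (1 / real T) * (\<Sum>t<T. integral\<^sup>L M (\<lambda>\<omega>.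
        let x = clx A B K x0 w t \<omega>; u = - (K *v x) in x \<bullet> (Q *v x) + u \<bullet> (R *v u))))"

end

theory Submission
  imports Defs
begin

text \<open>
  Write \<open>V x = x\<^sup>T P\<^sub>\<star> x\<close>. Completing the square in the Riccati map shows that
  \<open>\<R>\<close> contracts the relative error \<open>|x\<^sup>T F x - V x| \<le> \<delta> V x\<close> by the factor
  \<open>1 - 1/\<beta>\<^sub>\<star>\<close>, so after \<open>N - 1\<close> iterations the terminal cost is within
  \<open>\<eta> = \<beta>\<^sub>\<star>(1 - 1/\<beta>\<^sub>\<star>)\<^sup>N\<^sup>-\<^sup>1\<epsilon>\<^sub>p\<close> of \<open>P\<^sub>\<star>\<close> in spectral norm.
  The resulting gain satisfies \<open>\<parallel>K\<^sub>m\<^sub>p\<^sub>c - K\<^sub>\<star>\<parallel> = O(\<eta>)\<close>, and for \<open>\<eta>\<close> small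
  \<open>V\<close> remains a Lyapunov function of the perturbed closed loop with rate
  \<open>1 - 1/(2\<parallel>P\<^sub>\<star>\<parallel>)\<close>, which gives Schur stability.
  The average cost of a stabilising gain is \<open>\<sigma>\<^sub>w\<^sup>2\<close> times the series
  \<open>\<Sum>\<^sub>s tr(L\<^sup>s\<^sup>T (Q + K\<^sup>T R K) L\<^sup>s)\<close>; telescoping it against \<open>V\<close> leaves
  \<open>tr P\<^sub>\<star>\<close> plus the excess terms \<open>\<parallel>(K - K\<^sub>\<star>) L\<^sup>s\<parallel>\<^sup>2\<close> weighted by
  \<open>R + B\<^sup>T P\<^sub>\<star> B\<close>, which are quadratic in \<open>\<eta>\<close> and decay geometrically.
\<close>

declare transpose_matrix_vector[simp del]

section \<open>Quadratic forms of real matrices\<close>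

lemma transpose_mv_inner: "(transpose M *v x) \<bullet> y = x \<bullet> (M *v y)" for M :: "real^'c^'r"
  by (simp add: dot_lmul_matrix transpose_matrix_vector)

lemma inner_transpose_mv: "y \<bullet> (transpose M *v x) = (M *v y) \<bullet> x" for M :: "real^'c^'r"
  by (metis inner_commute transpose_mv_inner)

lemma symmetric_inner_commute:
  "transpose M = M \<Longrightarrow> x \<bullet> (M *v y) = y \<bullet> (M *v x)" for M :: "real^'n^'n"
  by (metis inner_commute transpose_mv_inner)

lemma matrix_entry_eq_inner_axis: "M $ i $ j = axis i 1 \<bullet> (M *v axis j (1::real))"
  for M :: "real^'c^'r"
  by (simp add: inner_axis' matrix_vector_mult_basis column_def)

lemma symmetric_if_inner_commute:
  fixes M :: "real^'n^'n"
  assumes "\<And>x y. x \<bullet> (M *v y) = y \<bullet> (M *v x)"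
  shows "transpose M = M"
proof -
  have "transpose M $ i $ j = M $ i $ j" for i j
    using assms[of "axis j 1" "axis i 1"]
    by (simp add: transpose_def matrix_entry_eq_inner_axis[symmetric])
  then show ?thesis by (simp add: vec_eq_iff)
qed

lemma matrix_vector_mult_uminus_right: "A *v (- v) = - (A *v v)" for A :: "real^'c^'r"
  by (simp add: matrix_vector_mult_def sum_negf vec_eq_iff)

lemma specnorm_nonneg: "0 \<le> specnorm (A :: real^'c^'r)"
  unfolding specnorm_def by (rule onorm_pos_le) simp

lemma norm_mv_le_specnorm: "norm (A *v x) \<le> specnorm A * norm x" for A :: "real^'c^'r"
  unfolding specnorm_def by (rule onorm) simp

lemma norm_mv_sq_le_specnorm: "(norm (A *v x))^2 \<le> (specnorm A)^2 * (norm x)^2"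
  for A :: "real^'c^'r"
  using power_mono[OF norm_mv_le_specnorm norm_ge_zero] by (simp add: power_mult_distrib)

lemma norm_mv_sq_le_of_specnorm_le:
  fixes A :: "real^'c^'r"
  assumes "specnorm A \<le> U"
  shows "(norm (A *v x))^2 \<le> U^2 * (norm x)^2"
proof -
  have "(specnorm A)^2 \<le> U^2" using assms specnorm_nonneg by (rule power_mono)
  then show ?thesis
    using norm_mv_sq_le_specnorm[of A x] by (meson mult_right_mono order_trans zero_le_power2)
qed

lemma abs_quadratic_form_le_specnorm: "\<bar>x \<bullet> (A *v x)\<bar> \<le> specnorm A * (norm x)^2"
  for A :: "real^'n^'n"
proof -
  have "\<bar>x \<bullet> (A *v x)\<bar> \<le> norm x * norm (A *v x)" by (simp add: Cauchy_Schwarz_ineq2)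
  also have "\<dots> \<le> norm x * (specnorm A * norm x)" by (simp add: mult_left_mono norm_mv_le_specnorm)
  finally show ?thesis by (simp add: power2_eq_square mult_ac)
qed

lemma quadratic_form_le_specnorm: "x \<bullet> (A *v x) \<le> specnorm A * (norm x)^2"
  for A :: "real^'n^'n"
  using abs_quadratic_form_le_specnorm abs_le_D1 by blast

lemma norm_transpose_mv_sq_le:
  fixes X :: "real^'c^'r"
  assumes "\<And>x. (norm (X *v x))^2 \<le> c * (norm x)^2"
  shows "(norm (transpose X *v y))^2 \<le> c * (norm y)^2"
proof -
  let ?z = "transpose X *v y"
  have c0: "c \<ge> 0" using assms[of "axis undefined 1"]
    by (metis norm_axis_1 mult_1_right one_power2 order_trans zero_le_power2)
  have "(norm ?z)^2 = y \<bullet> (X *v ?z)"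
    by (simp add: power2_norm_eq_inner transpose_mv_inner)
  also have "\<dots> \<le> norm y * norm (X *v ?z)" by (simp add: Cauchy_Schwarz_ineq2 abs_le_D1)
  also have "\<dots> \<le> norm y * (sqrt c * norm ?z)"
    using assms[of ?z] c0
    by (intro mult_left_mono)
      (metis real_le_rsqrt real_sqrt_mult real_sqrt_abs abs_norm_cancel power_mult_distrib
        real_sqrt_pow2 norm_ge_zero sqrt_le_D, simp)
  finally have "(norm ?z)^2 \<le> norm y * (sqrt c * norm ?z)" .
  then have "norm ?z \<le> norm y * sqrt c"
    using c0 by (cases "norm ?z = 0") (auto simp: power2_eq_square mult_ac)
  then have "(norm ?z)^2 \<le> (norm y * sqrt c)^2" by (simp add: power_mono)
  then show ?thesis using c0 by (simp add: power_mult_distrib mult_ac)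
qed

lemma norm_transpose_mv_le_specnorm: "norm (transpose A *v y) \<le> specnorm A * norm y"
  for A :: "real^'c^'r"
proof -
  have "(norm (transpose A *v y))^2 \<le> (specnorm A * norm y)^2"
    using norm_transpose_mv_sq_le[OF norm_mv_sq_le_specnorm] by (simp add: power_mult_distrib)
  then show ?thesis by (rule power2_le_imp_le) (simp add: specnorm_nonneg)
qed

lemma sum_norm_mv_axis_transpose:
  fixes Z :: "real^'c^'r"
  shows "(\<Sum>i\<in>UNIV. (norm (Z *v axis i 1))^2) = (\<Sum>j\<in>UNIV. (norm (transpose Z *v axis j 1))^2)"
proof -
  have a: "(norm (Z *v axis i 1))^2 = (\<Sum>j\<in>UNIV. (Z $ j $ i)^2)" for i
    unfolding power2_norm_eq_inner
    by (simp add: inner_vec_def matrix_vector_mult_basis column_def power2_eq_square)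
  have b: "(norm (transpose Z *v axis j 1))^2 = (\<Sum>i\<in>UNIV. (Z $ j $ i)^2)" for j
    unfolding power2_norm_eq_inner
    by (simp add: inner_vec_def matrix_vector_mult_basis column_def transpose_def power2_eq_square)
  show ?thesis unfolding a b by (rule sum.swap)
qed

lemma quadratic_form_lincomb:
  fixes P :: "real^'n^'n"
  assumes "transpose P = P"
  shows "(\<alpha> *\<^sub>R a + \<beta> *\<^sub>R b) \<bullet> (P *v (\<alpha> *\<^sub>R a + \<beta> *\<^sub>R b))
    = \<alpha>^2 * (a \<bullet> (P *v a)) + 2 * \<alpha> * \<beta> * (a \<bullet> (P *v b)) + \<beta>^2 * (b \<bullet> (P *v b))"
  using symmetric_inner_commute[OF assms, of b a]
  by (simp add: matrix_vector_right_distrib matrix_vector_mult_scaleR inner_add_left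
      inner_add_right power2_eq_square algebra_simps)

lemma quadratic_form_add_scaleR:
  fixes P :: "real^'n^'n"
  assumes "transpose P = P"
  shows "(x + t *\<^sub>R y) \<bullet> (P *v (x + t *\<^sub>R y))
    = x \<bullet> (P *v x) + 2 * t * (y \<bullet> (P *v x)) + t^2 * (y \<bullet> (P *v y))"
  using quadratic_form_lincomb[OF assms, of 1 x t y] symmetric_inner_commute[OF assms, of x y]
  by simp

lemma psd_quadratic_form_zero_imp_zero:
  fixes M :: "real^'n^'n"
  assumes M: "psd M" and z: "x \<bullet> (M *v x) = 0"
  shows "M *v x = 0"
proof (rule ccontr)
  assume ne: "M *v x \<noteq> 0"
  define y where "y = M *v x"
  define a where "a = y \<bullet> y"
  define c where "c = y \<bullet> (M *v y)"
  have a0: "a > 0" using ne by (simp add: a_def y_def)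
  have c0: "c \<ge> 0" using M by (simp add: psd_def c_def)
  \<comment> \<open>move from \<open>x\<close> against the gradient \<open>2 M x\<close>; a suitable step makes the form negative\<close>
  define t where "t = - a / (c + 1)"
  have "0 \<le> (x + t *\<^sub>R y) \<bullet> (M *v (x + t *\<^sub>R y))" using M by (simp add: psd_def)
  also have "\<dots> = 2 * t * a + t^2 * c"
    using quadratic_form_add_scaleR[of M x t y] M z by (simp add: psd_def a_def c_def y_def)
  finally have h: "0 \<le> (c+1)^2 * (2 * t * a + t^2 * c)" by simp
  have tc: "t * (c + 1) = - a" using c0 by (simp add: t_def)
  have "(c+1)^2 * (2 * t * a + t^2 * c) = 2*a*(t*(c+1))*(c+1) + (t*(c+1))^2*c"
    by (simp add: power2_eq_square algebra_simps)
  also have "\<dots> = 2*a*(-a)*(c+1) + (-a)^2*c" by (simp only: tc)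
  also have "\<dots> = a^2 * (c - 2 * (c + 1))" by (simp add: power2_eq_square algebra_simps)
  also have "\<dots> < 0" using a0 c0 by (intro mult_pos_neg) auto
  finally show False using h by simp
qed

lemma matrix_inv_mv_cancel:
  fixes M :: "real^'n^'n"
  assumes "\<And>x. M *v x = 0 \<Longrightarrow> x = 0"
  shows "M *v (matrix_inv M *v y) = y" "matrix_inv M *v (M *v y) = y"
proof -
  have "invertible M"
    using assms matrix_left_invertible_ker invertible_left_inverse by blast
  then have "M ** matrix_inv M = mat 1 \<and> matrix_inv M ** M = mat 1"
    unfolding invertible_def matrix_inv_def by (rule someI_ex)
  then show "M *v (matrix_inv M *v y) = y" "matrix_inv M *v (M *v y) = y"
    by (simp_all add: matrix_vector_mul_assoc)
qed

lemma transpose_matrix_inv_eq: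
  fixes M :: "real^'n^'n"
  assumes M: "transpose M = M" and inv: "\<And>y. M *v (matrix_inv M *v y) = y"
  shows "transpose (matrix_inv M) = matrix_inv M"
proof (rule symmetric_if_inner_commute)
  fix x y
  have "x \<bullet> (matrix_inv M *v y) = (M *v (matrix_inv M *v x)) \<bullet> (matrix_inv M *v y)"
    by (simp add: inv)
  also have "\<dots> = (matrix_inv M *v x) \<bullet> (M *v (matrix_inv M *v y))"
    using symmetric_inner_commute[OF M] by (simp add: inner_commute)
  also have "\<dots> = y \<bullet> (matrix_inv M *v x)" by (simp add: inv inner_commute)
  finally show "x \<bullet> (matrix_inv M *v y) = y \<bullet> (matrix_inv M *v x)" .
qed

lemma norm_mv_le_of_abs_quadratic_form_le:
  fixes D :: "real^'n^'n"
  assumes sym: "transpose D = D" and b: "\<And>x. \<bar>x \<bullet> (D *v x)\<bar> \<le> c * (norm x)^2"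
  shows "norm (D *v x) \<le> c * norm x"
proof (cases "D *v x = 0")
  case True
  have "c \<ge> 0" using b[of "axis undefined 1"]
    by (metis abs_ge_zero norm_axis_1 mult_1_right one_power2 order_trans)
  then show ?thesis using True by simp
next
  case False
  define y where "y = (norm x / norm (D *v x)) *\<^sub>R (D *v x)"
  have "4 * (y \<bullet> (D *v x))
      = (x + 1 *\<^sub>R y) \<bullet> (D *v (x + 1 *\<^sub>R y)) - (x + (-1) *\<^sub>R y) \<bullet> (D *v (x + (-1) *\<^sub>R y))"
    unfolding quadratic_form_add_scaleR[OF sym] by simp
  also have "\<dots> \<le> c * (norm (x + 1 *\<^sub>R y))^2 + c * (norm (x + (-1) *\<^sub>R y))^2"
    using b[of "x + 1 *\<^sub>R y"] b[of "x + (-1) *\<^sub>R y"] by linarith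
  also have "\<dots> = c * (2 * (norm x)^2 + 2 * (norm y)^2)"
    by (simp add: power2_norm_eq_inner inner_add_left inner_add_right inner_diff_left
        inner_diff_right algebra_simps)
  also have "norm y = norm x" using False by (simp add: y_def)
  finally have h: "y \<bullet> (D *v x) \<le> c * (norm x)^2" by simp
  have "y \<bullet> (D *v x) = norm x * norm (D *v x)"
    using False by (simp add: y_def power2_norm_eq_inner[symmetric] power2_eq_square)
  then have "norm x * norm (D *v x) \<le> norm x * (c * norm x)"
    using h by (simp add: power2_eq_square mult_ac)
  moreover have "norm x > 0" using False by auto
  ultimately show ?thesis by simp
qed

lemma smin_quadratic_form_lower:
  fixes M :: "real^'n^'n"
  assumes M: "psd M"
  shows "smin M * (norm x)^2 \<le> x \<bullet> (M *v x)"
proof -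
  let ?f = "\<lambda>x. x \<bullet> (M *v x)"
  have "sphere (0::real^'n) 1 \<noteq> {}" by (metis norm_axis_1 mem_sphere_0 empty_iff)
  moreover have "continuous_on (sphere 0 1) ?f" by (intro continuous_intros)
  ultimately obtain x0 where "x0 \<in> sphere 0 1" and mn: "\<And>y. y \<in> sphere 0 1 \<Longrightarrow> ?f x0 \<le> ?f y"
    using continuous_attains_inf[OF compact_sphere] by blast
  then have x0: "norm x0 = 1" by simp
  define mu where "mu = ?f x0"
  have ge: "mu * (norm x)^2 \<le> ?f x" for x
  proof (cases "x = 0")
    case False
    have "mu \<le> ?f ((1 / norm x) *\<^sub>R x)" unfolding mu_def by (rule mn) (use False in simp)
    also have "\<dots> = ?f x / (norm x)^2" by (simp add: matrix_vector_mult_scaleR power2_eq_square)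
    finally show ?thesis using False by (simp add: field_simps)
  qed simp
  \<comment> \<open>the minimiser on the sphere is an eigenvector: \<open>M - \<mu> I\<close> is psd and vanishes on it\<close>
  define M' where "M' = M - mu *\<^sub>R mat 1"
  have M'v: "M' *v y = M *v y - mu *\<^sub>R y" for y
    by (simp add: M'_def matrix_vector_mult_diff_rdistrib scaleR_matrix_vector_assoc[symmetric])
  have "psd M'"
    unfolding psd_def
  proof
    show "transpose M' = M'"
      using M by (intro symmetric_if_inner_commute)
        (simp add: psd_def M'v inner_diff_right inner_commute symmetric_inner_commute)
    show "\<forall>y. 0 \<le> y \<bullet> (M' *v y)"
      using ge by (simp add: M'v inner_diff_right power2_norm_eq_inner)
  qed
  moreover have "x0 \<bullet> (M' *v x0) = 0"
    using x0 by (simp add: M'v inner_diff_right mu_def power2_norm_eq_inner[symmetric])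
  ultimately have "M' *v x0 = 0" by (rule psd_quadratic_form_zero_imp_zero)
  then have "M *v x0 = mu *\<^sub>R x0" by (simp add: M'v)
  moreover have "mu \<ge> 0" using M by (simp add: psd_def mu_def)
  ultimately have "norm (M *v x0) = mu" using x0 by simp
  moreover have "smin M \<le> norm (M *v x0)"
    unfolding smin_def by (rule cInf_lower) (use x0 in \<open>auto intro!: bdd_belowI[where m=0]\<close>)
  ultimately have "smin M * (norm x)^2 \<le> mu * (norm x)^2" by (simp add: mult_right_mono)
  then show ?thesis using ge[of x] by linarith
qed

lemma smin_ge_1:
  fixes M :: "real^'n^'n"
  assumes "\<And>x. (norm x)^2 \<le> x \<bullet> (M *v x)"
  shows "1 \<le> smin M"
  unfolding smin_def
proof (rule cInf_greatest)
  show "{norm (M *v x) |x. norm x = 1} \<noteq> {}" using norm_axis_1 by blast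
  fix y assume "y \<in> {norm (M *v x) |x. norm x = 1}"
  then obtain x where x: "norm x = 1" "y = norm (M *v x)" by auto
  have "1 \<le> x \<bullet> (M *v x)" using assms[of x] x by simp
  also have "\<dots> \<le> norm x * norm (M *v x)" by (simp add: Cauchy_Schwarz_ineq2 abs_le_D1)
  finally show "1 \<le> y" using x by simp
qed

lemma psd_if_pd: "pd M \<Longrightarrow> psd M"
  unfolding pd_def psd_def by (metis inner_zero_left order.refl less_imp_le)

lemma quadratic_form_ge_of_psd_minus_mat_1:
  "psd (M - mat 1) \<Longrightarrow> (norm x)^2 \<le> x \<bullet> (M *v x)" for M :: "real^'n^'n"
  by (auto simp: psd_def matrix_vector_mult_diff_rdistrib inner_diff_right power2_norm_eq_inner)

section \<open>Lyapunov functions and matrix powers\<close>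

primrec matpow :: "real^'n^'n \<Rightarrow> nat \<Rightarrow> real^'n^'n" where
  "matpow L 0 = mat 1"
| "matpow L (Suc s) = L ** matpow L s"

lemma schur_stable_of_lyapunov:
  fixes L P :: "real^'n^'n"
  assumes P: "transpose P = P" and P_ge: "\<And>x. (norm x)^2 \<le> x \<bullet> (P *v x)"
    and dec: "\<And>x. (L *v x) \<bullet> (P *v (L *v x)) \<le> \<rho> * (x \<bullet> (P *v x))" and \<rho>: "\<rho> < 1"
  shows "schur_stable L"
  unfolding schur_stable_def
proof (intro allI impI, elim conjE)
  fix c :: complex and v :: "complex^'n"
  assume v0: "v \<noteq> 0" and ev: "cmat L *v v = c *s v"
  define a where "a = (\<chi> i. Re (v $ i))"
  define b where "b = (\<chi> i. Im (v $ i))"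
  have La: "L *v a = Re c *\<^sub>R a + (- Im c) *\<^sub>R b"
  proof -
    have "(L *v a) $ i = Re ((cmat L *v v) $ i)" for i
      by (simp add: a_def cmat_def matrix_vector_mult_def)
    then show ?thesis using ev by (simp add: vec_eq_iff a_def b_def)
  qed
  have Lb: "L *v b = Im c *\<^sub>R a + Re c *\<^sub>R b"
  proof -
    have "(L *v b) $ i = Im ((cmat L *v v) $ i)" for i
      by (simp add: b_def cmat_def matrix_vector_mult_def)
    then show ?thesis using ev by (simp add: vec_eq_iff a_def b_def algebra_simps)
  qed
  let ?V = "\<lambda>x. x \<bullet> (P *v x)"
  \<comment> \<open>on the real span of the real and imaginary parts \<open>L\<close> acts as multiplication by \<open>c\<close>\<close>
  have "?V (L *v a) + ?V (L *v b) = ((Re c)^2 + (Im c)^2) * (?V a + ?V b)"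
    unfolding La Lb quadratic_form_lincomb[OF P] by (simp add: algebra_simps power2_eq_square)
  then have e: "?V (L *v a) + ?V (L *v b) = (cmod c)^2 * (?V a + ?V b)"
    by (simp add: cmod_power2)
  have "a \<noteq> 0 \<or> b \<noteq> 0"
    using v0 by (auto simp: a_def b_def vec_eq_iff complex_eq_iff)
  then have "(norm a)^2 + (norm b)^2 > 0" by (auto simp: add_pos_nonneg add_nonneg_pos)
  then have pos: "?V a + ?V b > 0" using P_ge[of a] P_ge[of b] by linarith
  have "(cmod c)^2 * (?V a + ?V b) \<le> \<rho> * (?V a + ?V b)"
    using e dec[of a] dec[of b] by (simp add: algebra_simps)
  then have "(cmod c)^2 < 1" using pos \<rho> by simp
  then show "cmod c < 1" by (simp add: power_less_one_iff abs_square_less_1)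
qed

lemma matpow_norm_sq_le_of_lyapunov:
  fixes L P :: "real^'n^'n"
  assumes P_ge: "\<And>x. (norm x)^2 \<le> x \<bullet> (P *v x)" and P_le: "\<And>x. x \<bullet> (P *v x) \<le> c * (norm x)^2"
    and dec: "\<And>x. (L *v x) \<bullet> (P *v (L *v x)) \<le> \<rho> * (x \<bullet> (P *v x))" and \<rho>: "0 \<le> \<rho>"
  shows "(norm (matpow L s *v x))^2 \<le> c * \<rho>^s * (norm x)^2"
proof -
  have V: "(matpow L s *v x) \<bullet> (P *v (matpow L s *v x)) \<le> \<rho>^s * (x \<bullet> (P *v x))"
  proof (induction s)
    case (Suc s)
    have "(matpow L (Suc s) *v x) \<bullet> (P *v (matpow L (Suc s) *v x))
        \<le> \<rho> * ((matpow L s *v x) \<bullet> (P *v (matpow L s *v x)))"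
      using dec[of "matpow L s *v x"] by (simp add: matrix_vector_mul_assoc[symmetric])
    also have "\<dots> \<le> \<rho> * (\<rho>^s * (x \<bullet> (P *v x)))" using Suc.IH \<rho> by (rule mult_left_mono)
    finally show ?case by (simp add: mult_ac)
  qed simp
  have "(norm (matpow L s *v x))^2 \<le> \<rho>^s * (x \<bullet> (P *v x))" using P_ge V order_trans by blast
  also have "\<dots> \<le> \<rho>^s * (c * (norm x)^2)" using P_le \<rho> by (intro mult_left_mono) auto
  finally show ?thesis by (simp add: mult_ac)
qed

section \<open>The Riccati map\<close>

locale lq =
  fixes A :: "real^'n^'n" and B :: "real^'m^'n" and Q :: "real^'n^'n" and R :: "real^'m^'m"
  assumes R_sym: "transpose R = R" and R_ge: "\<And>z. (norm z)^2 \<le> z \<bullet> (R *v z)"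
    and Q_sym: "transpose Q = Q" and Q_ge: "\<And>x. (norm x)^2 \<le> x \<bullet> (Q *v x)"
begin

abbreviation ric :: "real^'n^'n \<Rightarrow> real^'n^'n" where "ric \<equiv> riccati A B Q R"
abbreviation gain :: "real^'n^'n \<Rightarrow> real^'n^'m" where "gain \<equiv> gainK A B R"

definition input_weight :: "real^'n^'n \<Rightarrow> real^'m^'m" where
  "input_weight F = R + transpose B ** F ** B"

definition riccati_factor :: "real^'n^'n \<Rightarrow> real^'n^'n" where
  "riccati_factor F = mat 1 + B ** matrix_inv R ** transpose B ** F"

lemma R_nonneg: "0 \<le> z \<bullet> (R *v z)"
  using R_ge[of z] by (meson order_trans zero_le_power2)

lemma input_weight_mv: "input_weight F *v z = R *v z + transpose B *v (F *v (B *v z))"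
  by (simp add: input_weight_def matrix_vector_mult_add_rdistrib matrix_vector_mul_assoc[symmetric])

lemma input_weight_quadratic_form: "z \<bullet> (input_weight F *v z) = z \<bullet> (R *v z) + (B *v z) \<bullet> (F *v (B *v z))"
  by (simp add: input_weight_mv inner_add_right inner_transpose_mv)

lemma transpose_input_weight: "transpose F = F \<Longrightarrow> transpose (input_weight F) = input_weight F"
  by (rule symmetric_if_inner_commute)
    (simp add: input_weight_mv inner_add_right inner_transpose_mv transpose_mv_inner
      symmetric_inner_commute R_sym)

lemma R_le_input_weight: "psd F \<Longrightarrow> z \<bullet> (R *v z) \<le> z \<bullet> (input_weight F *v z)"
  by (simp add: psd_def input_weight_quadratic_form)

lemma input_weight_ge: "psd F \<Longrightarrow> (norm z)^2 \<le> z \<bullet> (input_weight F *v z)"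
  using R_ge[of z] R_le_input_weight[of F z] by linarith

lemma input_weight_nonneg: "psd F \<Longrightarrow> 0 \<le> z \<bullet> (input_weight F *v z)"
  using input_weight_ge[of F z] by (meson order_trans zero_le_power2)

lemma input_weight_inv:
  assumes "psd F"
  shows "input_weight F *v (matrix_inv (input_weight F) *v y) = y"
    "matrix_inv (input_weight F) *v (input_weight F *v y) = y"
proof -
  have inj: "input_weight F *v z = 0 \<Longrightarrow> z = 0" for z
    using input_weight_ge[OF assms, of z] by simp
  show "input_weight F *v (matrix_inv (input_weight F) *v y) = y"
    "matrix_inv (input_weight F) *v (input_weight F *v y) = y"
    using matrix_inv_mv_cancel[OF inj] by auto
qed

lemma R_inv: "R *v (matrix_inv R *v y) = y" "matrix_inv R *v (R *v y) = y"
proof -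
  have inj: "R *v z = 0 \<Longrightarrow> z = 0" for z
    using R_ge[of z] by simp
  show "R *v (matrix_inv R *v y) = y" "matrix_inv R *v (R *v y) = y"
    using matrix_inv_mv_cancel[OF inj] by auto
qed

lemma R_inv_nonneg: "0 \<le> y \<bullet> (matrix_inv R *v y)"
  using R_nonneg[of "matrix_inv R *v y"] by (simp add: R_inv inner_commute)

lemma riccati_factor_mv:
  "riccati_factor F *v y = y + B *v (matrix_inv R *v (transpose B *v (F *v y)))"
  by (simp add: riccati_factor_def matrix_vector_mult_add_rdistrib matrix_vector_mul_assoc[symmetric])

lemma riccati_factor_inv:
  assumes F: "psd F"
  shows "riccati_factor F *v (matrix_inv (riccati_factor F) *v y) = y"
proof (rule matrix_inv_mv_cancel)
  fix y assume z: "riccati_factor F *v y = 0"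
  let ?u = "F *v y"
  have y: "y = - (B *v (matrix_inv R *v (transpose B *v ?u)))"
    using z by (simp add: riccati_factor_mv eq_neg_iff_add_eq_0)
  \<comment> \<open>\<open>y\<^sup>T F y = -(B\<^sup>T F y)\<^sup>T R\<^sup>-\<^sup>1 (B\<^sup>T F y) \<le> 0\<close>, so \<open>F y = 0\<close> and then \<open>y = 0\<close>\<close>
  have "y \<bullet> ?u = - ((transpose B *v ?u) \<bullet> (matrix_inv R *v (transpose B *v ?u)))"
    by (subst y) (simp add: transpose_mv_inner inner_commute)
  then have "y \<bullet> ?u = 0"
    using R_inv_nonneg[of "transpose B *v ?u"] F by (simp add: psd_def eq_iff)
  then have "?u = 0" using psd_quadratic_form_zero_imp_zero F by blast
  then show "y = 0" using y by simp
qed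

lemma matrix_inversion_riccati_factor:
  assumes F: "psd F"
  shows "F *v (matrix_inv (riccati_factor F) *v y)
    = F *v y - F *v (B *v (matrix_inv (input_weight F) *v (transpose B *v (F *v y))))"
proof -
  define z where "z = matrix_inv (riccati_factor F) *v y"
  define u where "u = matrix_inv R *v (transpose B *v (F *v z))"
  have y: "y = z + B *v u"
    using riccati_factor_inv[OF F, of y] by (simp add: z_def u_def riccati_factor_mv)
  have "transpose B *v (F *v y) = R *v u + transpose B *v (F *v (B *v u))"
    by (simp add: y matrix_vector_right_distrib u_def R_inv)
  then have "matrix_inv (input_weight F) *v (transpose B *v (F *v y)) = u"
    using input_weight_inv(2)[OF F] by (simp add: input_weight_mv)
  moreover have "F *v y - F *v (B *v u) = F *v z" by (simp add: y matrix_vector_right_distrib)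
  ultimately show ?thesis by (simp add: z_def)
qed

lemma riccati_mv:
  "ric F *v x = transpose A *v (F *v (matrix_inv (riccati_factor F) *v (A *v x))) + Q *v x"
  by (simp add: riccati_def riccati_factor_def[symmetric] matrix_vector_mult_add_rdistrib
      matrix_vector_mul_assoc[symmetric])

lemma gain_mv: "gain F *v x = matrix_inv (input_weight F) *v (transpose B *v (F *v (A *v x)))"
  by (simp add: gainK_def input_weight_def[symmetric] matrix_vector_mul_assoc[symmetric])

lemma riccati_bilinear:
  assumes F: "psd F"
  shows "x \<bullet> (ric F *v y) = x \<bullet> (Q *v y) + (A *v x) \<bullet> (F *v (A *v y))
     - (transpose B *v (F *v (A *v x)))
         \<bullet> (matrix_inv (input_weight F) *v (transpose B *v (F *v (A *v y))))"
  using symmetric_inner_commute[of F "A *v x"] F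
  by (simp add: riccati_mv inner_add_right inner_transpose_mv matrix_inversion_riccati_factor
      inner_diff_right transpose_mv_inner psd_def inner_commute)

lemma transpose_riccati:
  assumes F: "psd F"
  shows "transpose (ric F) = ric F"
proof (rule symmetric_if_inner_commute)
  have "transpose (matrix_inv (input_weight F)) = matrix_inv (input_weight F)"
    using F by (intro transpose_matrix_inv_eq transpose_input_weight input_weight_inv)
      (auto simp: psd_def)
  then show "x \<bullet> (ric F *v y) = y \<bullet> (ric F *v x)" for x y
    using F Q_sym unfolding riccati_bilinear[OF F] psd_def
    by (metis symmetric_inner_commute)
qed

lemma riccati_completion_of_squares:
  assumes F: "psd F"
  shows "x \<bullet> (ric F *v x) + (k - gain F *v x) \<bullet> (input_weight F *v (k - gain F *v x))
    = x \<bullet> (Q *v x) + k \<bullet> (R *v k) + (A *v x - B *v k) \<bullet> (F *v (A *v x - B *v k))"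
proof -
  have sF: "transpose F = F" using F by (simp add: psd_def)
  have sG: "transpose (input_weight F) = input_weight F" using transpose_input_weight sF .
  define a where "a = A *v x"
  define kF where "kF = gain F *v x"
  have GkF: "input_weight F *v kF = transpose B *v (F *v a)"
    by (simp add: kF_def gain_mv a_def input_weight_inv(1)[OF F])
  have r: "x \<bullet> (ric F *v x) = x \<bullet> (Q *v x) + a \<bullet> (F *v a) - kF \<bullet> (input_weight F *v kF)"
    using riccati_bilinear[OF F, of x x]
    by (simp add: a_def[symmetric] GkF[symmetric] kF_def[symmetric] gain_mv
        input_weight_inv(2)[OF F] inner_commute)
  have cross: "a \<bullet> (F *v (B *v k)) = k \<bullet> (input_weight F *v kF)"
    using symmetric_inner_commute[OF sF] by (simp add: GkF inner_transpose_mv)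
  have e1: "(a - B *v k) \<bullet> (F *v (a - B *v k))
      = a \<bullet> (F *v a) - 2 * (k \<bullet> (input_weight F *v kF)) + (B *v k) \<bullet> (F *v (B *v k))"
    using cross symmetric_inner_commute[OF sF, of a "B *v k"]
    by (simp add: matrix_vector_mult_diff_distrib inner_diff_left inner_diff_right)
  have e2: "(k - kF) \<bullet> (input_weight F *v (k - kF))
      = k \<bullet> (input_weight F *v k) - 2 * (k \<bullet> (input_weight F *v kF)) + kF \<bullet> (input_weight F *v kF)"
    using symmetric_inner_commute[OF sG, of kF k]
    by (simp add: matrix_vector_mult_diff_distrib inner_diff_left inner_diff_right)
  show ?thesis
    unfolding a_def[symmetric] kF_def[symmetric] using r e1 e2 input_weight_quadratic_form[of k F]
    by simp
qed

lemma riccati_completion_of_squares_gain: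
  assumes F: "psd F"
  shows "x \<bullet> (ric F *v x) + ((K - gain F) *v x) \<bullet> (input_weight F *v ((K - gain F) *v x))
    = x \<bullet> (Q *v x) + (K *v x) \<bullet> (R *v (K *v x))
      + ((A - B ** K) *v x) \<bullet> (F *v ((A - B ** K) *v x))"
  using riccati_completion_of_squares[OF F, of x "K *v x"]
  by (simp add: matrix_vector_mult_diff_rdistrib matrix_vector_mul_assoc[symmetric])

lemma riccati_le_stage_cost:
  assumes F: "psd F"
  shows "x \<bullet> (ric F *v x) \<le> x \<bullet> (Q *v x) + (K *v x) \<bullet> (R *v (K *v x))
    + ((A - B ** K) *v x) \<bullet> (F *v ((A - B ** K) *v x))"
  using riccati_completion_of_squares_gain[OF F, of x K]
    input_weight_nonneg[OF F, of "(K - gain F) *v x"]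
  by linarith

lemma riccati_eq_stage_cost_gain:
  assumes F: "psd F"
  shows "x \<bullet> (ric F *v x) = x \<bullet> (Q *v x) + (gain F *v x) \<bullet> (R *v (gain F *v x))
    + ((A - B ** gain F) *v x) \<bullet> (F *v ((A - B ** gain F) *v x))"
  using riccati_completion_of_squares_gain[OF F, of x "gain F"] by simp

lemma Q_le_riccati: "psd F \<Longrightarrow> x \<bullet> (Q *v x) \<le> x \<bullet> (ric F *v x)"
  using riccati_eq_stage_cost_gain[of F x] R_nonneg[of "gain F *v x"] by (simp add: psd_def)

lemma psd_riccati: "psd F \<Longrightarrow> psd (ric F)"
  using transpose_riccati Q_le_riccati Q_ge unfolding psd_def
  by (meson order_trans zero_le_power2)

lemma smin_R_mult_norm_input_weight_inv_le:
  assumes F: "psd F"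
  shows "smin R * norm (matrix_inv (input_weight F) *v y) \<le> norm y"
proof -
  define z where "z = matrix_inv (input_weight F) *v y"
  have "smin R * (norm z)^2 \<le> z \<bullet> (R *v z)"
    using R_sym R_nonneg by (intro smin_quadratic_form_lower) (simp add: psd_def)
  also have "\<dots> \<le> z \<bullet> (input_weight F *v z)" by (rule R_le_input_weight[OF F])
  also have "\<dots> = z \<bullet> y" by (simp add: z_def input_weight_inv(1)[OF F])
  also have "\<dots> \<le> norm z * norm y" by (simp add: Cauchy_Schwarz_ineq2 abs_le_D1)
  finally have "smin R * (norm z)^2 \<le> norm z * norm y" .
  then show ?thesis
    by (cases "z = 0") (auto simp: z_def[symmetric] power2_eq_square mult_ac)
qed

end

section \<open>The average cost of a stabilising gain\<close>

lemma Cesaro_mean_tendsto_zero: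
  fixes c :: "nat \<Rightarrow> real"
  assumes "c \<longlonglongrightarrow> 0"
  shows "(\<lambda>T. (1 / real T) * (\<Sum>t<T. c t)) \<longlonglongrightarrow> 0"
proof (rule LIMSEQ_I)
  fix r :: real assume r: "r > 0"
  obtain N where N: "\<And>t. t \<ge> N \<Longrightarrow> norm (c t) < r / 2"
    using LIMSEQ_D[OF assms, of "r/2"] r by auto
  define S where "S = (\<Sum>t<N. norm (c t))"
  obtain N2 :: nat where N2: "N2 > 2 * S / r" using reals_Archimedean2 by blast
  show "\<exists>no. \<forall>T\<ge>no. norm ((1 / real T) * (\<Sum>t<T. c t) - 0) < r"
  proof (intro exI[of _ "max (Suc N) N2"] allI impI)
    fix T assume T: "max (Suc N) N2 \<le> T"
    have split: "{..<T} = {..<N} \<union> {N..<T}" using T by auto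
    have "norm (\<Sum>t<T. c t) \<le> (\<Sum>t<T. norm (c t))" by (rule norm_sum)
    also have "\<dots> = S + (\<Sum>t\<in>{N..<T}. norm (c t))"
      unfolding S_def split by (subst sum.union_disjoint) auto
    also have "(\<Sum>t\<in>{N..<T}. norm (c t)) \<le> (\<Sum>t\<in>{N..<T}. r / 2)"
      by (intro sum_mono) (use N in \<open>auto intro: less_imp_le\<close>)
    also have "\<dots> \<le> real T * (r / 2)" using r by (simp add: mult_right_mono)
    finally have h: "norm (\<Sum>t<T. c t) \<le> S + real T * (r / 2)" by simp
    have "r * real N2 \<le> r * real T" using T r by (intro mult_left_mono) auto
    moreover have "2 * S < r * real N2" using N2 r by (simp add: field_simps)
    ultimately have "norm (\<Sum>t<T. c t) < real T * r" using h by (simp add: mult.commute)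
    then show "norm ((1 / real T) * (\<Sum>t<T. c t) - 0) < r"
      using T by (simp add: field_simps)
  qed
qed

lemma Cesaro_mean_tendsto:
  fixes c :: "nat \<Rightarrow> real"
  assumes "c \<longlonglongrightarrow> l"
  shows "(\<lambda>T. (1 / real T) * (\<Sum>t<T. c t)) \<longlonglongrightarrow> l"
proof -
  have "(\<lambda>T. (1 / real T) * (\<Sum>t<T. c t - l)) \<longlonglongrightarrow> 0"
    using assms by (intro Cesaro_mean_tendsto_zero) (simp add: LIM_zero)
  moreover have "eventually (\<lambda>T. (1 / real T) * (\<Sum>t<T. c t - l) = (1 / real T) * (\<Sum>t<T. c t) - l)
      sequentially"
    using eventually_gt_at_top[of 0] by eventually_elim (simp add: sum_subtractf field_simps)
  ultimately have "(\<lambda>T. (1 / real T) * (\<Sum>t<T. c t) - l) \<longlonglongrightarrow> 0"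
    by (rule Lim_transform_eventually)
  then show ?thesis by (simp add: LIM_zero_iff)
qed

text \<open>\<open>trace_quad Y X\<close> is \<open>tr(X\<^sup>T Y X)\<close>.\<close>

definition trace_quad :: "real^'n^'n \<Rightarrow> real^'k^'n \<Rightarrow> real" where
  "trace_quad Y X = (\<Sum>i\<in>UNIV. (X *v axis i 1) \<bullet> (Y *v (X *v axis i 1)))"

lemma trace_quad_congruence: "trace_quad (transpose L ** Y ** L) X = trace_quad Y (L ** X)"
  by (simp add: trace_quad_def matrix_vector_mul_assoc[symmetric] inner_transpose_mv)

lemma trace_quad_mat_1: "trace_quad Y (mat 1) = (\<Sum>i\<in>UNIV. Y $ i $ i)"
  by (simp add: trace_quad_def matrix_entry_eq_inner_axis)

lemma abs_trace_quad_le: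
  fixes Y :: "real^'n^'n" and X :: "real^'k^'n"
  assumes "\<And>x. (norm (X *v x))^2 \<le> c * (norm x)^2"
  shows "\<bar>trace_quad Y X\<bar> \<le> real CARD('k) * (specnorm Y * c)"
proof -
  have "\<bar>trace_quad Y X\<bar> \<le> (\<Sum>i\<in>(UNIV::'k set). \<bar>(X *v axis i 1) \<bullet> (Y *v (X *v axis i 1))\<bar>)"
    unfolding trace_quad_def by (rule sum_abs)
  also have "\<dots> \<le> (\<Sum>i\<in>(UNIV::'k set). specnorm Y * c)"
  proof (rule sum_mono)
    fix i :: 'k
    have "\<bar>(X *v axis i 1) \<bullet> (Y *v (X *v axis i 1))\<bar> \<le> specnorm Y * (norm (X *v axis i 1))^2"
      by (rule abs_quadratic_form_le_specnorm)
    also have "\<dots> \<le> specnorm Y * c"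
      using assms[of "axis i 1"] specnorm_nonneg[of Y] by (intro mult_left_mono) auto
    finally show "\<bar>(X *v axis i 1) \<bullet> (Y *v (X *v axis i 1))\<bar> \<le> specnorm Y * c" .
  qed
  finally show ?thesis by simp
qed

lemma abs_mult_le_sum_squares: "\<bar>a * b\<bar> \<le> a^2 + b^2" for a b :: real
proof -
  have "2 * (\<bar>a\<bar> * \<bar>b\<bar>) \<le> a^2 + b^2"
    using sum_squares_bound[of "\<bar>a\<bar>" "\<bar>b\<bar>"] by (simp add: mult.assoc)
  moreover have "0 \<le> \<bar>a\<bar> * \<bar>b\<bar>" by simp
  ultimately show ?thesis unfolding abs_mult by linarith
qed

lemma measurable_vec_nth:
  "f \<in> borel_measurable M \<Longrightarrow> (\<lambda>\<omega>. f \<omega> $ i) \<in> borel_measurable M" for f :: "'a \<Rightarrow> real^'n"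
  by (rule borel_measurable_continuous_on[of "\<lambda>v. v $ i"]) (auto intro: continuous_intros)

lemma closed_loop_step:
  "clx A B K x0 w (Suc t) \<omega> = (A - B ** K) *v clx A B K x0 w t \<omega> + w t \<omega>"
  by (simp add: matrix_vector_mult_diff_rdistrib matrix_vector_mul_assoc[symmetric]
      matrix_vector_mult_uminus_right)

context
  fixes M :: "'a measure" and sw sx :: real
    and x0 :: "'a \<Rightarrow> real^'n" and w :: "nat \<Rightarrow> 'a \<Rightarrow> real^'n"
  assumes noise: "noise_model M sw sx x0 w"
begin

definition sq_integrable :: "('a \<Rightarrow> real) \<Rightarrow> bool" where
  "sq_integrable f \<longleftrightarrow> f \<in> borel_measurable M \<and> integrable M (\<lambda>\<omega>. (f \<omega>)^2)"

lemma sq_integrable_imp_integrable_mult: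
  "sq_integrable f \<Longrightarrow> sq_integrable g \<Longrightarrow> integrable M (\<lambda>\<omega>. f \<omega> * g \<omega>)"
  unfolding sq_integrable_def
  by (rule Bochner_Integration.integrable_bound[where f="\<lambda>\<omega>. (f \<omega>)^2 + (g \<omega>)^2"])
    (auto intro!: AE_I2 simp: abs_mult_le_sum_squares)

lemma sq_integrable_add:
  assumes f: "sq_integrable f" and g: "sq_integrable g"
  shows "sq_integrable (\<lambda>\<omega>. f \<omega> + g \<omega>)"
proof -
  have "integrable M (\<lambda>\<omega>. (f \<omega>)^2 + (g \<omega>)^2 + 2 * (f \<omega> * g \<omega>))"
    using f g sq_integrable_imp_integrable_mult[OF f g] unfolding sq_integrable_def by auto
  moreover have "(\<lambda>\<omega>. f \<omega> + g \<omega>) \<in> borel_measurable M"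
    using f g unfolding sq_integrable_def by auto
  ultimately show ?thesis unfolding sq_integrable_def by (simp add: power2_sum mult.assoc)
qed

lemma sq_integrable_cmult: "sq_integrable f \<Longrightarrow> sq_integrable (\<lambda>\<omega>. c * f \<omega>)"
  unfolding sq_integrable_def by (auto simp: power_mult_distrib)

lemma sq_integrable_sum:
  "finite I \<Longrightarrow> (\<And>i. i \<in> I \<Longrightarrow> sq_integrable (f i)) \<Longrightarrow> sq_integrable (\<lambda>\<omega>. \<Sum>i\<in>I. f i \<omega>)"
proof (induction I rule: finite_induct)
  case empty then show ?case by (simp add: sq_integrable_def)
next
  case (insert a I) then show ?case by (simp add: sq_integrable_add)
qed

lemma sq_integrable_initial_state: "sq_integrable (\<lambda>\<omega>. x0 \<omega> $ i)"
  using noise unfolding noise_model_def sq_integrable_def by (auto intro: measurable_vec_nth)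

lemma sq_integrable_noise: "sq_integrable (\<lambda>\<omega>. w t \<omega> $ i)"
  using noise unfolding noise_model_def sq_integrable_def by (auto intro: measurable_vec_nth)

lemma integral_bilinear_form:
  fixes u v :: "'a \<Rightarrow> real^'n" and Y :: "real^'n^'n"
  assumes u: "\<And>i. sq_integrable (\<lambda>\<omega>. u \<omega> $ i)" and v: "\<And>i. sq_integrable (\<lambda>\<omega>. v \<omega> $ i)"
  shows "integrable M (\<lambda>\<omega>. u \<omega> \<bullet> (Y *v v \<omega>))"
    "integral\<^sup>L M (\<lambda>\<omega>. u \<omega> \<bullet> (Y *v v \<omega>))
      = (\<Sum>i\<in>UNIV. \<Sum>j\<in>UNIV. Y$i$j * integral\<^sup>L M (\<lambda>\<omega>. u \<omega> $ i * v \<omega> $ j))"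
proof -
  have e: "u \<omega> \<bullet> (Y *v v \<omega>) = (\<Sum>i\<in>UNIV. \<Sum>j\<in>UNIV. Y$i$j * (u \<omega> $ i * v \<omega> $ j))" for \<omega>
    by (simp add: inner_vec_def matrix_vector_mult_def sum_distrib_left mult_ac)
  have "integrable M (\<lambda>\<omega>. u \<omega> $ i * v \<omega> $ j)" for i j
    by (rule sq_integrable_imp_integrable_mult[OF u v])
  then show "integrable M (\<lambda>\<omega>. u \<omega> \<bullet> (Y *v v \<omega>))"
    "integral\<^sup>L M (\<lambda>\<omega>. u \<omega> \<bullet> (Y *v v \<omega>))
      = (\<Sum>i\<in>UNIV. \<Sum>j\<in>UNIV. Y$i$j * integral\<^sup>L M (\<lambda>\<omega>. u \<omega> $ i * v \<omega> $ j))"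
    unfolding e by (auto simp: integral_sum)
qed

lemma integral_white_quadratic_form:
  fixes u :: "'a \<Rightarrow> real^'n" and Y :: "real^'n^'n"
  assumes "\<And>i j. integral\<^sup>L M (\<lambda>\<omega>. u \<omega> $ i * u \<omega> $ j) = (if i = j then c else 0)"
    and "\<And>i. sq_integrable (\<lambda>\<omega>. u \<omega> $ i)"
  shows "integral\<^sup>L M (\<lambda>\<omega>. u \<omega> \<bullet> (Y *v u \<omega>)) = c * trace_quad Y (mat 1)"
  using integral_bilinear_form(2)[OF assms(2) assms(2), of Y] assms(1)
  by (simp add: trace_quad_mat_1 if_distrib sum_distrib_left mult.commute cong: if_cong)

lemma closed_loop_state_uncorrelated:
  "(\<forall>i. sq_integrable (\<lambda>\<omega>. clx A B K x0 w t \<omega> $ i))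
   \<and> (\<forall>s\<ge>t. \<forall>i j. integral\<^sup>L M (\<lambda>\<omega>. clx A B K x0 w t \<omega> $ i * w s \<omega> $ j) = 0)"
proof (induction t)
  case 0 then show ?case using sq_integrable_initial_state noise by (simp add: noise_model_def)
next
  case (Suc t)
  define L where "L = A - B ** K"
  let ?X = "clx A B K x0 w t"
  have comp: "clx A B K x0 w (Suc t) \<omega> $ i = (\<Sum>k\<in>UNIV. L$i$k * ?X \<omega> $ k) + w t \<omega> $ i" for \<omega> i
    by (simp only: closed_loop_step L_def[symmetric]) (simp add: matrix_vector_mult_def)
  have "sq_integrable (\<lambda>\<omega>. clx A B K x0 w (Suc t) \<omega> $ i)" for i
    unfolding comp using Suc.IH
    by (intro sq_integrable_add sq_integrable_sum sq_integrable_cmult sq_integrable_noise) auto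
  moreover have "integral\<^sup>L M (\<lambda>\<omega>. clx A B K x0 w (Suc t) \<omega> $ i * w s \<omega> $ j) = 0"
    if s: "s \<ge> Suc t" for s i j
  proof -
    have e: "clx A B K x0 w (Suc t) \<omega> $ i * w s \<omega> $ j
        = (\<Sum>k\<in>UNIV. L$i$k * (?X \<omega> $ k * w s \<omega> $ j)) + w t \<omega> $ i * w s \<omega> $ j" for \<omega>
      unfolding comp by (simp add: sum_distrib_right distrib_right mult.assoc)
    have "integrable M (\<lambda>\<omega>. ?X \<omega> $ k * w s \<omega> $ j)" for k
      using Suc.IH sq_integrable_imp_integrable_mult sq_integrable_noise by blast
    moreover have "integrable M (\<lambda>\<omega>. w t \<omega> $ i * w s \<omega> $ j)"
      using sq_integrable_imp_integrable_mult sq_integrable_noise by blast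
    ultimately show ?thesis
      unfolding e using Suc.IH s noise by (simp add: integral_sum noise_model_def)
  qed
  ultimately show ?case by blast
qed

definition state_moment :: "real^'n^'n \<Rightarrow> real^'m^'n \<Rightarrow> real^'n^'m \<Rightarrow> nat \<Rightarrow> real^'n^'n \<Rightarrow> real"
  where "state_moment A B K t Y
    = integral\<^sup>L M (\<lambda>\<omega>. clx A B K x0 w t \<omega> \<bullet> (Y *v clx A B K x0 w t \<omega>))"

lemma state_moment_Suc:
  "state_moment A B K (Suc t) Y
    = state_moment A B K t (transpose (A - B ** K) ** Y ** (A - B ** K)) + sw^2 * trace_quad Y (mat 1)"
proof -
  define L where "L = A - B ** K"
  let ?X = "clx A B K x0 w t"
  have sX: "\<And>i. sq_integrable (\<lambda>\<omega>. ?X \<omega> $ i)"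
    and zX: "\<And>i j. integral\<^sup>L M (\<lambda>\<omega>. ?X \<omega> $ i * w t \<omega> $ j) = 0"
    using closed_loop_state_uncorrelated by blast+
  note sw = sq_integrable_noise[of t]
  have pt: "clx A B K x0 w (Suc t) \<omega> \<bullet> (Y *v clx A B K x0 w (Suc t) \<omega>)
     = (?X \<omega> \<bullet> ((transpose L ** Y ** L) *v ?X \<omega>) + ?X \<omega> \<bullet> ((transpose L ** Y) *v w t \<omega>))
       + (w t \<omega> \<bullet> ((Y ** L) *v ?X \<omega>) + w t \<omega> \<bullet> (Y *v w t \<omega>))" for \<omega>
    unfolding closed_loop_step L_def[symmetric]
    by (simp add: matrix_vector_mul_assoc[symmetric] inner_transpose_mv matrix_vector_right_distrib
        inner_add_left inner_add_right del: clx.simps)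
  \<comment> \<open>the cross terms vanish because \<open>x\<^sub>t\<close> is uncorrelated with \<open>w\<^sub>t\<close>\<close>
  have "integral\<^sup>L M (\<lambda>\<omega>. ?X \<omega> \<bullet> ((transpose L ** Y) *v w t \<omega>)) = 0"
    using integral_bilinear_form(2)[OF sX sw] zX by simp
  moreover have "integral\<^sup>L M (\<lambda>\<omega>. w t \<omega> \<bullet> ((Y ** L) *v ?X \<omega>)) = 0"
    using integral_bilinear_form(2)[OF sw sX] zX by (simp add: mult.commute)
  moreover have "integral\<^sup>L M (\<lambda>\<omega>. w t \<omega> \<bullet> (Y *v w t \<omega>)) = sw^2 * trace_quad Y (mat 1)"
    using noise by (intro integral_white_quadratic_form sq_integrable_noise) (simp add: noise_model_def)
  ultimately show ?thesis
    unfolding state_moment_def pt L_def[symmetric]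
    using integral_bilinear_form(1)[OF sX sX] integral_bilinear_form(1)[OF sX sw]
      integral_bilinear_form(1)[OF sw sX] integral_bilinear_form(1)[OF sw sw]
    by simp
qed

lemma state_moment_eq:
  "state_moment A B K t Y = sx^2 * trace_quad Y (matpow (A - B ** K) t)
    + sw^2 * (\<Sum>s<t. trace_quad Y (matpow (A - B ** K) s))"
proof (induction t arbitrary: Y)
  case 0
  show ?case
    using noise unfolding state_moment_def
    by (simp, intro integral_white_quadratic_form sq_integrable_initial_state)
      (simp add: noise_model_def)
next
  case (Suc t)
  show ?case
    by (simp add: state_moment_Suc Suc.IH trace_quad_congruence sum.lessThan_Suc_shift
        algebra_simps del: sum.lessThan_Suc)
qed

lemma lqr_cost_eq_suminf:
  fixes A :: "real^'n^'n" and B :: "real^'m^'n" and K :: "real^'n^'m"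
    and Q :: "real^'n^'n" and R :: "real^'m^'m"
  assumes \<rho>: "0 \<le> \<rho>" "\<rho> < 1"
    and decay: "\<And>s x. (norm (matpow (A - B ** K) s *v x))^2 \<le> C * \<rho>^s * (norm x)^2"
  defines "a \<equiv> \<lambda>s. trace_quad (Q + transpose K ** R ** K) (matpow (A - B ** K) s)"
  shows "summable a" and "lqr_cost M A B Q R x0 w K = sw^2 * suminf a"
proof -
  define Y where "Y = Q + transpose K ** R ** K"
  have bound: "norm (a s) \<le> (real CARD('n) * specnorm Y * C) * \<rho>^s" for s
    using abs_trace_quad_le[of "matpow (A - B ** K) s" "C * \<rho>^s" Y, OF decay]
    by (simp add: a_def Y_def mult_ac)
  have geometric: "summable (\<lambda>s. (real CARD('n) * specnorm Y * C) * \<rho>^s)"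
    using \<rho> by (intro summable_mult summable_geometric) simp
  show sa: "summable a"
    by (rule summable_comparison_test[OF _ geometric]) (use bound in blast)
  \<comment> \<open>the moments converge to \<open>\<sigma>\<^sub>w\<^sup>2 \<Sum>a\<close>, and so do their Cesaro means\<close>
  have "(\<lambda>t. sx^2 * a t + sw^2 * (\<Sum>s<t. a s)) \<longlonglongrightarrow> sx^2 * 0 + sw^2 * suminf a"
    by (intro tendsto_intros summable_LIMSEQ_zero[OF sa] summable_LIMSEQ[OF sa])
  then have moments: "(\<lambda>t. state_moment A B K t Y) \<longlonglongrightarrow> sw^2 * suminf a"
    by (simp add: state_moment_eq a_def Y_def)
  have stage_cost: "(let x = clx A B K x0 w t \<omega>; u = - (K *v x) in x \<bullet> (Q *v x) + u \<bullet> (R *v u))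
     = clx A B K x0 w t \<omega> \<bullet> (Y *v clx A B K x0 w t \<omega>)" for t \<omega>
    by (simp add: Let_def Y_def matrix_vector_mult_add_rdistrib matrix_vector_mul_assoc[symmetric]
        inner_add_right inner_transpose_mv matrix_vector_mult_uminus_right del: clx.simps)
  have "lqr_cost M A B Q R x0 w K = lim (\<lambda>T. (1 / real T) * (\<Sum>t<T. state_moment A B K t Y))"
    unfolding lqr_cost_def stage_cost state_moment_def ..
  also have "\<dots> = sw^2 * suminf a" by (rule limI[OF Cesaro_mean_tendsto[OF moments]])
  finally show "lqr_cost M A B Q R x0 w K = sw^2 * suminf a" .
qed

end

section \<open>Perturbation of the Riccati fixed point\<close>

lemma powr_three_halves: "0 \<le> x \<Longrightarrow> x powr (3 / 2) = x * sqrt (x :: real)"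
  using powr_add[of x 1 "1 / 2"] by (simp add: powr_half_sqrt)

lemma perturbation_size_le:
  fixes P U s \<eta> :: real
  assumes P: "P \<ge> 1" and U: "U \<ge> P" and s: "s \<ge> 1" and \<eta>: "\<eta> \<ge> 0"
    and small: "\<eta> \<le> s / (40 * U^4 * (P * sqrt P))"
  shows "P^2 * U^4 * (\<eta> / s)^2 * (1600 * P^2) \<le> 1"
proof -
  define r where "r = \<eta> / s"
  have r0: "r \<ge> 0" using \<eta> s by (simp add: r_def)
  have U1: "U \<ge> 1" using P U by simp
  have den: "40 * U^4 * (P * sqrt P) > 0" using P U1 by simp
  have "40 * U^4 * (P * sqrt P) * r \<le> 1"
    using small s den by (simp add: r_def field_simps)
  moreover have "0 \<le> 40 * U^4 * (P * sqrt P) * r" using den r0 by simp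
  ultimately have "(40 * U^4 * (P * sqrt P) * r)^2 \<le> 1" by (simp add: power_le_one)
  also have "(40 * U^4 * (P * sqrt P) * r)^2 = 1600 * U^8 * P^3 * r^2"
    using P by (simp add: power_mult_distrib power2_eq_square[of "sqrt P"] power2_eq_square[of "U^4"])
       (simp add: power_mult_distrib[symmetric] power_add[symmetric] power2_eq_square
         power3_eq_cube mult_ac)
  finally have h: "1600 * U^8 * P^3 * r^2 \<le> 1" .
  have "P \<le> U^4" using U U1 power_increasing[of 1 4 U] by simp
  then have "(1600 * U^4 * P^3 * r^2) * P \<le> (1600 * U^4 * P^3 * r^2) * U^4"
    using r0 P by (intro mult_left_mono) auto
  then have "P^2 * U^4 * r^2 * (1600 * P^2) \<le> (1600 * U^4 * P^3 * r^2) * U^4"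
    by (simp add: power2_eq_square power3_eq_cube mult_ac)
  also have "\<dots> = 1600 * U^8 * P^3 * r^2" by (simp add: power_add[symmetric] mult_ac)
  finally show ?thesis using h unfolding r_def by linarith
qed

lemma contraction_rate_le:
  fixes P h X u v :: real
  assumes P: "P \<ge> 1" and h0: "h \<ge> 0" and h: "h * (1600 * P^2) \<le> 1" and X: "X \<ge> 0"
    and u: "u \<le> (1 - 1 / P) * X" and v: "v \<le> h * X"
  shows "(1 + 1 / (4 * P)) * u + (1 + 4 * P) * v \<le> (1 - 1 / (2 * P)) * X"
proof -
  have P0: "P > 0" using P by simp
  have a1: "(1 + 1 / (4 * P)) * u \<le> (1 + 1 / (4 * P)) * ((1 - 1 / P) * X)"
    using u P0 by (intro mult_left_mono) auto
  have a2: "(1 + 1 / (4 * P)) * (1 - 1 / P) \<le> 1 - 3 / (4 * P)"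
    using P0 by (simp add: field_simps)
  have a3: "(1 + 1 / (4 * P)) * ((1 - 1 / P) * X) \<le> (1 - 3 / (4 * P)) * X"
    using mult_right_mono[OF a2 X] by (simp add: mult_ac)
  have b1: "(1 + 4 * P) * v \<le> (1 + 4 * P) * (h * X)"
    using v P0 by (simp add: mult_left_mono)
  have "(1 + 4 * P) * h \<le> 5 * P * h" using P h0 by (intro mult_right_mono) auto
  also have "5 * P * h \<le> 1 / (320 * P)" using h P0 by (simp add: field_simps power2_eq_square)
  finally have b: "(1 + 4 * P) * h \<le> 1 / (320 * P)" .
  have b2: "(1 + 4 * P) * (h * X) \<le> (1 / (320 * P)) * X"
    using mult_right_mono[OF b X] by (simp add: mult_ac)
  have "(1 - 3 / (4 * P)) + (1 / (320 * P)) \<le> (1 - 1 / (2 * P))" using P0 by (simp add: field_simps)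
  then have "((1 - 3 / (4 * P)) + (1 / (320 * P))) * X \<le> (1 - 1 / (2 * P)) * X"
    using X by (rule mult_right_mono)
  then show ?thesis using a1 a3 b1 b2 by (simp add: algebra_simps)
qed

lemma cost_gap_constant_le:
  fixes P U m sw c \<eta> :: real
  assumes P1: "1 \<le> P" and PU: "P \<le> U" and m: "0 \<le> m" and c: "0 \<le> c"
  shows "sw^2 * (c * (m * (U^2 * \<eta>^2 * P * P)) * (2 * P))
    \<le> 32 * m * sw^2 * U^4 * (sqrt P + 1)^2 * P * c * \<eta>^2"
proof -
  have "P^2 \<le> U^2" using P1 PU by (intro power_mono) auto
  then have "U^2 * P^2 \<le> U^4"
    using mult_left_mono[of "P^2" "U^2" "U^2"] by (simp add: power2_eq_square eval_nat_numeral mult_ac)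
  moreover have "U^4 \<le> U^4 * (sqrt P + 1)^2"
    using P1 by (simp add: mult_le_cancel_left1 one_le_power)
  moreover have "0 \<le> U^4 * (sqrt P + 1)^2" using P1 PU by simp
  ultimately have "2 * (U^2 * P^2) \<le> 32 * (U^4 * (sqrt P + 1)^2)" by linarith
  then have le: "2 * (U^2 * P^2) * (P * (m * sw^2 * c * \<eta>^2))
      \<le> 32 * (U^4 * (sqrt P + 1)^2) * (P * (m * sw^2 * c * \<eta>^2))"
    using P1 m c by (intro mult_right_mono) auto
  have l: "sw^2 * (c * (m * (U^2 * \<eta>^2 * P * P)) * (2 * P))
      = 2 * (U^2 * P^2) * (P * (m * sw^2 * c * \<eta>^2))"
    by (simp add: power2_eq_square mult_ac)
  have r: "32 * m * sw^2 * U^4 * (sqrt P + 1)^2 * P * c * \<eta>^2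
      = 32 * (U^4 * (sqrt P + 1)^2) * (P * (m * sw^2 * c * \<eta>^2))"
    by (simp only: mult_ac)
  show ?thesis using le unfolding l r .
qed

locale lq_solution = lq A B Q R for A :: "real^'n^'n" and B :: "real^'m^'n" and Q R +
  fixes Ps :: "real^'n^'n"
  assumes psd_Ps: "psd Ps" and riccati_Ps: "ric Ps = Ps"
begin

abbreviation Ks :: "real^'n^'m" where "Ks \<equiv> gain Ps"

definition V :: "real^'n \<Rightarrow> real" where "V x = x \<bullet> (Ps *v x)"

lemma Ps_sym: "transpose Ps = Ps" using psd_Ps by (simp add: psd_def)

lemma V_nonneg: "0 \<le> V x" using psd_Ps by (simp add: psd_def V_def)

lemma V_eq_stage_cost: "V x = x \<bullet> (Q *v x) + (Ks *v x) \<bullet> (R *v (Ks *v x)) + V ((A - B ** Ks) *v x)"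
  using riccati_eq_stage_cost_gain[OF psd_Ps, of x] by (simp add: riccati_Ps V_def)

lemma V_le_stage_cost: "V x \<le> x \<bullet> (Q *v x) + (K *v x) \<bullet> (R *v (K *v x)) + V ((A - B ** K) *v x)"
  using riccati_le_stage_cost[OF psd_Ps, of x K] by (simp add: riccati_Ps V_def)

lemma V_optimal_decrease: "V ((A - B ** Ks) *v x) \<le> V x - (norm x)^2"
  using V_eq_stage_cost[of x] R_nonneg[of "Ks *v x"] Q_ge[of x] by linarith

lemma Q_le_V: "x \<bullet> (Q *v x) \<le> V x"
  using V_eq_stage_cost[of x] R_nonneg[of "Ks *v x"] V_nonneg[of "(A - B ** Ks) *v x"] by linarith

lemma norm_sq_le_V: "(norm x)^2 \<le> V x"
  using Q_ge[of x] Q_le_V[of x] by linarith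

lemma V_le_specnorm: "V x \<le> specnorm Ps * (norm x)^2"
  unfolding V_def by (rule quadratic_form_le_specnorm)

lemma specnorm_Ps_ge_1: "1 \<le> specnorm Ps"
  using norm_sq_le_V[of "axis undefined 1"] V_le_specnorm[of "axis undefined 1"] by simp

lemma smin_Q_ge_1: "1 \<le> smin Q"
  by (rule smin_ge_1[OF Q_ge])

lemma smin_Q_mult_norm_sq_le: "smin Q * (norm x)^2 \<le> x \<bullet> (Q *v x)"
  using Q_sym Q_ge
  by (intro smin_quadratic_form_lower) (auto simp: psd_def intro: order_trans[OF zero_le_power2])

lemma smin_Q_le_specnorm_Ps: "smin Q \<le> specnorm Ps"
  using smin_Q_mult_norm_sq_le[of "axis undefined 1"] Q_le_V[of "axis undefined 1"]
    V_le_specnorm[of "axis undefined 1"]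
  by simp

text \<open>
  The optimal cost-to-go dominates the stage cost: \<open>V \<le> \<beta>\<^sub>\<star> x\<^sup>T Q x\<close>, i.e.
  \<open>(1 - \<theta>) V \<le> x\<^sup>T Q x\<close> with \<open>\<theta> = 1 - 1/\<beta>\<^sub>\<star>\<close>; this is what makes the
  Riccati map contract relative errors.
\<close>

lemma V_le_beta_stage_cost:
  "(1 - (1 - 1 / (specnorm Ps / smin Q))) * V x \<le> x \<bullet> (Q *v x)"
proof -
  have "(1 - (1 - 1 / (specnorm Ps / smin Q))) * V x = (smin Q / specnorm Ps) * V x" by simp
  also have "\<dots> \<le> (smin Q / specnorm Ps) * (specnorm Ps * (norm x)^2)"
    using smin_Q_ge_1 specnorm_Ps_ge_1 V_le_specnorm[of x] by (intro mult_left_mono) auto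
  also have "\<dots> = smin Q * (norm x)^2" using specnorm_Ps_ge_1 by simp
  also have "\<dots> \<le> x \<bullet> (Q *v x)" by (rule smin_Q_mult_norm_sq_le)
  finally show ?thesis .
qed

lemma riccati_relative_error_step:
  assumes F: "psd F" and \<delta>: "0 \<le> \<delta>" and \<theta>: "0 \<le> \<theta>" "\<theta> \<le> 1"
    and hQ: "\<And>x. (1 - \<theta>) * V x \<le> x \<bullet> (Q *v x)"
    and hF: "\<And>x. (1 - \<delta>) * V x \<le> x \<bullet> (F *v x) \<and> x \<bullet> (F *v x) \<le> (1 + \<delta>) * V x"
  shows "(1 - \<delta> * \<theta>) * V x \<le> x \<bullet> (ric F *v x) \<and> x \<bullet> (ric F *v x) \<le> (1 + \<delta> * \<theta>) * V x"
proof
  let ?k = "Ks *v x" and ?L = "(A - B ** Ks) *v x"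
  \<comment> \<open>upper bound: compare with the optimal gain of \<open>P\<^sub>\<star>\<close>\<close>
  have "x \<bullet> (ric F *v x) \<le> x \<bullet> (Q *v x) + ?k \<bullet> (R *v ?k) + ?L \<bullet> (F *v ?L)"
    by (rule riccati_le_stage_cost[OF F])
  also have "?L \<bullet> (F *v ?L) \<le> (1 + \<delta>) * V ?L" using hF by blast
  finally have u1: "x \<bullet> (ric F *v x) \<le> x \<bullet> (Q *v x) + ?k \<bullet> (R *v ?k) + (1 + \<delta>) * V ?L"
    by simp
  have "V ?L \<le> \<theta> * V x"
    using V_eq_stage_cost[of x] hQ[of x] R_nonneg[of ?k] by (simp add: algebra_simps)
  then have "\<delta> * V ?L \<le> \<delta> * (\<theta> * V x)" using \<delta> by (rule mult_left_mono)
  then show "x \<bullet> (ric F *v x) \<le> (1 + \<delta> * \<theta>) * V x"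
    using u1 V_eq_stage_cost[of x] by (simp add: algebra_simps)
next
  \<comment> \<open>lower bound: compare with the optimal gain of \<open>F\<close>\<close>
  let ?kF = "gain F *v x" and ?LF = "(A - B ** gain F) *v x"
  show "(1 - \<delta> * \<theta>) * V x \<le> x \<bullet> (ric F *v x)"
  proof (cases "\<delta> \<le> 1")
    case True
    have "(1 - \<delta>) * V ?LF \<le> ?LF \<bullet> (F *v ?LF)" using hF by blast
    moreover have "(1 - \<delta>) * V x \<le> (1 - \<delta>) * (x \<bullet> (Q *v x) + ?kF \<bullet> (R *v ?kF) + V ?LF)"
      using V_le_stage_cost[of x "gain F"] True by (intro mult_left_mono) auto
    moreover have "\<delta> * ((1 - \<theta>) * V x) \<le> \<delta> * (x \<bullet> (Q *v x))" using hQ[of x] \<delta> by (rule mult_left_mono)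
    moreover have "0 \<le> \<delta> * (?kF \<bullet> (R *v ?kF))" using \<delta> R_nonneg by simp
    ultimately show ?thesis
      using riccati_eq_stage_cost_gain[OF F, of x] by (simp add: algebra_simps)
  next
    case False
    then have "\<theta> * V x \<le> \<delta> * (\<theta> * V x)"
      using \<theta> V_nonneg[of x]
      by (metis mult_le_cancel_right1 mult.commute mult_nonneg_nonneg less_eq_real_def not_le)
    then have "(1 - \<delta> * \<theta>) * V x \<le> (1 - \<theta>) * V x" by (simp add: algebra_simps)
    then show ?thesis using hQ[of x] Q_le_riccati[OF F, of x] by linarith
  qed
qed

lemma riccati_iterate_relative_error:
  assumes F0: "psd F0" and \<delta>: "0 \<le> \<delta>" and \<theta>: "0 \<le> \<theta>" "\<theta> \<le> 1"
    and hQ: "\<And>x. (1 - \<theta>) * V x \<le> x \<bullet> (Q *v x)"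
    and hF: "\<And>x. (1 - \<delta>) * V x \<le> x \<bullet> (F0 *v x) \<and> x \<bullet> (F0 *v x) \<le> (1 + \<delta>) * V x"
  shows "psd ((ric ^^ k) F0) \<and> (\<forall>x. (1 - \<delta> * \<theta>^k) * V x \<le> x \<bullet> ((ric ^^ k) F0 *v x)
    \<and> x \<bullet> ((ric ^^ k) F0 *v x) \<le> (1 + \<delta> * \<theta>^k) * V x)"
proof (induction k)
  case 0 then show ?case using F0 hF by simp
next
  case (Suc k)
  have F: "psd ((ric ^^ k) F0)" using Suc.IH by blast
  have "(1 - \<delta> * \<theta>^k * \<theta>) * V x \<le> x \<bullet> (ric ((ric ^^ k) F0) *v x)
    \<and> x \<bullet> (ric ((ric ^^ k) F0) *v x) \<le> (1 + \<delta> * \<theta>^k * \<theta>) * V x" for x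
    using \<delta> \<theta> by (intro riccati_relative_error_step[OF F _ \<theta> hQ]) (use Suc.IH in auto)
  then show ?case using psd_riccati[OF F] by (simp add: mult_ac)
qed

lemma V_relative_error_of_specnorm:
  assumes "specnorm (P - Ps) \<le> \<epsilon>"
  shows "\<bar>x \<bullet> (P *v x) - V x\<bar> \<le> \<epsilon> / smin Q * V x"
proof -
  have "\<bar>x \<bullet> (P *v x) - V x\<bar> = \<bar>x \<bullet> ((P - Ps) *v x)\<bar>"
    by (simp add: V_def matrix_vector_mult_diff_rdistrib inner_diff_right)
  also have "\<dots> \<le> specnorm (P - Ps) * (norm x)^2" by (rule abs_quadratic_form_le_specnorm)
  also have "\<dots> \<le> \<epsilon> * (norm x)^2" using assms by (intro mult_right_mono) auto
  also have "\<dots> = \<epsilon> / smin Q * (smin Q * (norm x)^2)" using smin_Q_ge_1 by simp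
  also have "\<dots> \<le> \<epsilon> / smin Q * V x"
    using smin_Q_mult_norm_sq_le[of x] Q_le_V[of x] assms specnorm_nonneg[of "P - Ps"] smin_Q_ge_1
    by (intro mult_left_mono) auto
  finally show ?thesis .
qed

lemma riccati_iterate_error:
  assumes P: "psd P" and err: "specnorm (P - Ps) \<le> \<epsilon>"
  defines "\<beta> \<equiv> specnorm Ps / smin Q"
  shows "psd ((ric ^^ k) P)" and "0 \<le> \<beta> * (1 - 1 / \<beta>)^k * \<epsilon>"
    and "norm (((ric ^^ k) P - Ps) *v x) \<le> \<beta> * (1 - 1 / \<beta>)^k * \<epsilon> * norm x"
proof -
  define \<theta> where "\<theta> = 1 - 1 / \<beta>"
  define \<delta> where "\<delta> = \<epsilon> / smin Q"
  have \<beta>1: "\<beta> \<ge> 1" using smin_Q_ge_1 smin_Q_le_specnorm_Ps by (simp add: \<beta>_def)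
  have \<theta>: "0 \<le> \<theta>" "\<theta> \<le> 1" using \<beta>1 by (auto simp: \<theta>_def)
  have \<epsilon>: "0 \<le> \<epsilon>" using err specnorm_nonneg[of "P - Ps"] by linarith
  then have \<delta>: "0 \<le> \<delta>" using smin_Q_ge_1 by (simp add: \<delta>_def)
  have "psd ((ric ^^ k) P) \<and> (\<forall>x. \<bar>x \<bullet> ((ric ^^ k) P *v x) - V x\<bar> \<le> \<delta> * \<theta>^k * V x)"
    using riccati_iterate_relative_error[OF P \<delta> \<theta>, of k] V_le_beta_stage_cost
      V_relative_error_of_specnorm[OF err]
    unfolding \<theta>_def \<delta>_def \<beta>_def by (simp add: abs_le_iff algebra_simps)
  then have F: "psd ((ric ^^ k) P)"
    and rel: "\<And>x. \<bar>x \<bullet> ((ric ^^ k) P *v x) - V x\<bar> \<le> \<delta> * \<theta>^k * V x" by blast+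
  show "psd ((ric ^^ k) P)" by (fact F)
  have \<delta>P: "\<delta> * specnorm Ps = \<beta> * \<epsilon>"
    using smin_Q_ge_1 by (simp add: \<beta>_def \<delta>_def)
  show "0 \<le> \<beta> * (1 - 1 / \<beta>)^k * \<epsilon>" using \<beta>1 \<theta> \<epsilon> by (simp add: \<theta>_def[symmetric])
  \<comment> \<open>relative error in the quadratic form is an absolute error in spectral norm by polarisation\<close>
  show "norm (((ric ^^ k) P - Ps) *v x) \<le> \<beta> * (1 - 1 / \<beta>)^k * \<epsilon> * norm x"
  proof (rule norm_mv_le_of_abs_quadratic_form_le)
    show "transpose ((ric ^^ k) P - Ps) = (ric ^^ k) P - Ps"
      using F Ps_sym
      by (intro symmetric_if_inner_commute)
        (simp add: psd_def matrix_vector_mult_diff_rdistrib inner_diff_right symmetric_inner_commute)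
    fix y
    have "\<bar>y \<bullet> (((ric ^^ k) P - Ps) *v y)\<bar> \<le> \<delta> * \<theta>^k * V y"
      using rel[of y] by (simp add: V_def matrix_vector_mult_diff_rdistrib inner_diff_right)
    also have "\<dots> \<le> \<delta> * \<theta>^k * (specnorm Ps * (norm y)^2)"
      using V_le_specnorm[of y] \<delta> \<theta> by (intro mult_left_mono) auto
    also have "\<dots> = (\<delta> * specnorm Ps) * \<theta>^k * (norm y)^2" by (simp only: mult_ac)
    also have "\<dots> = \<beta> * (1 - 1 / \<beta>)^k * \<epsilon> * (norm y)^2"
      unfolding \<delta>P \<theta>_def by (simp only: mult_ac)
    finally show "\<bar>y \<bullet> (((ric ^^ k) P - Ps) *v y)\<bar> \<le> \<beta> * (1 - 1 / \<beta>)^k * \<epsilon> * (norm y)^2" .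
  qed
qed

lemma gain_minus_optimal_mv:
  assumes F: "psd F"
  shows "(gain F - Ks) *v x
    = matrix_inv (input_weight F) *v (transpose B *v ((F - Ps) *v ((A - B ** Ks) *v x)))"
proof -
  define a where "a = A *v x"
  define kF where "kF = gain F *v x"
  define ks where "ks = Ks *v x"
  have GkF: "input_weight F *v kF = transpose B *v (F *v a)"
    by (simp add: kF_def gain_mv a_def input_weight_inv(1)[OF F])
  have Gks: "input_weight Ps *v ks = transpose B *v (Ps *v a)"
    by (simp add: ks_def gain_mv a_def input_weight_inv(1)[OF psd_Ps])
  have "input_weight F *v (kF - ks) = transpose B *v ((F - Ps) *v (a - B *v ks))"
    using GkF Gks
    by (simp add: input_weight_mv matrix_vector_mult_diff_distrib matrix_vector_mult_diff_rdistrib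
        algebra_simps)
  also have "a - B *v ks = (A - B ** Ks) *v x"
    by (simp add: a_def ks_def matrix_vector_mult_diff_rdistrib matrix_vector_mul_assoc[symmetric])
  finally have "input_weight F *v (kF - ks) = transpose B *v ((F - Ps) *v ((A - B ** Ks) *v x))" .
  then have "kF - ks = matrix_inv (input_weight F) *v (transpose B *v ((F - Ps) *v ((A - B ** Ks) *v x)))"
    using input_weight_inv(2)[OF F, of "kF - ks"] by simp
  then show ?thesis by (simp add: kF_def ks_def matrix_vector_mult_diff_rdistrib)
qed

lemma V_diff_le:
  assumes t: "t > 0"
  shows "V (a - b) \<le> (1 + t) * V a + (1 + 1 / t) * V b"
proof -
  have "V (a - b) = V a - 2 * (b \<bullet> (Ps *v a)) + V b"
    using quadratic_form_add_scaleR[OF Ps_sym, of a "-1" b] by (simp add: V_def)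
  moreover have "0 \<le> V (b + t *\<^sub>R a)" by (rule V_nonneg)
  then have "- 2 * t * (b \<bullet> (Ps *v a)) \<le> V b + t^2 * V a"
    using quadratic_form_add_scaleR[OF Ps_sym, of b t a] symmetric_inner_commute[OF Ps_sym, of a b]
    by (simp add: V_def)
  then have "- 2 * (b \<bullet> (Ps *v a)) \<le> V b / t + t * V a"
    using t by (simp add: field_simps power2_eq_square)
  ultimately show ?thesis by (simp add: algebra_simps)
qed

lemma norm_optimal_closed_loop_sq_le: "(norm ((A - B ** Ks) *v x))^2 \<le> specnorm Ps * (norm x)^2"
  using norm_sq_le_V[of "(A - B ** Ks) *v x"] V_optimal_decrease[of x] V_le_specnorm[of x]
  by (smt (verit) zero_le_power2)

lemma norm_gain_minus_optimal_sq_le: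
  assumes F: "psd F" and \<eta>: "0 \<le> \<eta>" and err: "\<And>x. norm ((F - Ps) *v x) \<le> \<eta> * norm x"
    and nB: "specnorm B \<le> U"
  shows "(norm ((gain F - Ks) *v x))^2 \<le> U^2 * (\<eta> / smin R)^2 * specnorm Ps * (norm x)^2"
proof -
  let ?L = "(A - B ** Ks) *v x"
  have sR: "1 \<le> smin R" by (rule smin_ge_1[OF R_ge])
  have "smin R * norm ((gain F - Ks) *v x) \<le> norm (transpose B *v ((F - Ps) *v ?L))"
    unfolding gain_minus_optimal_mv[OF F] by (rule smin_R_mult_norm_input_weight_inv_le[OF F])
  also have "\<dots> \<le> specnorm B * norm ((F - Ps) *v ?L)" by (rule norm_transpose_mv_le_specnorm)
  also have "\<dots> \<le> U * (\<eta> * norm ?L)"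
    using err[of ?L] nB specnorm_nonneg[of B] by (intro mult_mono) auto
  finally have "norm ((gain F - Ks) *v x) \<le> U * (\<eta> / smin R) * norm ?L"
    using sR by (simp add: field_simps)
  then have "(norm ((gain F - Ks) *v x))^2 \<le> (U * (\<eta> / smin R) * norm ?L)^2"
    by (rule power_mono) simp
  also have "\<dots> = U^2 * (\<eta> / smin R)^2 * (norm ?L)^2" by (simp add: power_mult_distrib power_divide)
  also have "\<dots> \<le> U^2 * (\<eta> / smin R)^2 * (specnorm Ps * (norm x)^2)"
    using norm_optimal_closed_loop_sq_le[of x] by (intro mult_left_mono) auto
  finally show ?thesis by (simp add: mult_ac)
qed

lemma V_perturbed_decrease:
  assumes F: "psd F" and \<eta>: "0 \<le> \<eta>" and err: "\<And>x. norm ((F - Ps) *v x) \<le> \<eta> * norm x"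
    and nB: "specnorm B \<le> U" and nP: "specnorm Ps \<le> U"
    and small: "\<eta> \<le> smin R / (40 * U^4 * (specnorm Ps * sqrt (specnorm Ps)))"
  shows "V ((A - B ** gain F) *v x) \<le> (1 - 1 / (2 * specnorm Ps)) * V x"
proof -
  define P where "P = specnorm Ps"
  define h where "h = P^2 * U^4 * (\<eta> / smin R)^2"
  let ?z = "(gain F - Ks) *v x"
  have P1: "P \<ge> 1" using specnorm_Ps_ge_1 by (simp add: P_def)
  have h0: "h \<ge> 0" by (simp add: h_def)
  have hb: "h * (1600 * P^2) \<le> 1"
    unfolding h_def using P1 nP small smin_ge_1[OF R_ge] \<eta>
    by (intro perturbation_size_le) (auto simp: P_def)
  have "(A - B ** gain F) *v x = (A - B ** Ks) *v x - B *v ?z"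
    by (simp add: matrix_vector_mult_diff_rdistrib matrix_vector_mul_assoc[symmetric]
        matrix_vector_mult_diff_distrib)
  then have "V ((A - B ** gain F) *v x)
      \<le> (1 + 1 / (4 * P)) * V ((A - B ** Ks) *v x) + (1 + 1 / (1 / (4 * P))) * V (B *v ?z)"
    using P1 by (simp only:) (rule V_diff_le, simp)
  then have split: "V ((A - B ** gain F) *v x)
      \<le> (1 + 1 / (4 * P)) * V ((A - B ** Ks) *v x) + (1 + 4 * P) * V (B *v ?z)"
    by simp
  have u: "V ((A - B ** Ks) *v x) \<le> (1 - 1 / P) * V x"
  proof -
    have "V x / P \<le> (norm x)^2" using V_le_specnorm[of x] P1 by (simp add: P_def field_simps)
    then show ?thesis using V_optimal_decrease[of x] P1 by (simp add: algebra_simps)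
  qed
  have v: "V (B *v ?z) \<le> h * V x"
  proof -
    have "V (B *v ?z) \<le> P * (norm (B *v ?z))^2" using V_le_specnorm by (simp add: P_def)
    also have "\<dots> \<le> P * (U^2 * (norm ?z)^2)"
      using norm_mv_sq_le_of_specnorm_le[OF nB, of ?z] P1 by (intro mult_left_mono) auto
    also have "\<dots> \<le> P * (U^2 * (U^2 * (\<eta> / smin R)^2 * P * (norm x)^2))"
      using norm_gain_minus_optimal_sq_le[OF F \<eta> err nB, of x] P1
      by (intro mult_left_mono) (auto simp: P_def)
    also have "\<dots> = h * (norm x)^2" by (simp add: h_def power2_eq_square eval_nat_numeral mult_ac)
    also have "\<dots> \<le> h * V x" using norm_sq_le_V h0 by (rule mult_left_mono)
    finally show ?thesis .
  qed
  show ?thesis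
    using split contraction_rate_le[OF P1 h0 hb V_nonneg u v] unfolding P_def by linarith
qed

lemma V_optimal_contraction: "V ((A - B ** Ks) *v x) \<le> (1 - 1 / (2 * specnorm Ps)) * V x"
proof -
  have "V x / (2 * specnorm Ps) \<le> (norm x)^2"
    using V_le_specnorm[of x] specnorm_Ps_ge_1 V_nonneg[of x] by (simp add: field_simps)
  then show ?thesis using V_optimal_decrease[of x] by (simp add: algebra_simps)
qed

lemma matpow_closed_loop_decay:
  assumes dec: "\<And>x. V ((A - B ** K) *v x) \<le> \<rho> * V x" and \<rho>: "0 \<le> \<rho>"
  shows "(norm (matpow (A - B ** K) s *v x))^2 \<le> specnorm Ps * \<rho>^s * (norm x)^2"
  using norm_sq_le_V V_le_specnorm dec \<rho> unfolding V_def
  by (rule matpow_norm_sq_le_of_lyapunov)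

section \<open>The excess cost of a perturbed gain\<close>

definition excess :: "real^'n^'m \<Rightarrow> nat \<Rightarrow> real" where
  "excess K s = trace_quad (input_weight Ps) ((K - Ks) ** matpow (A - B ** K) s)"

lemma excess_optimal: "excess Ks s = 0"
  by (simp add: excess_def trace_quad_def)

lemma excess_nonneg: "0 \<le> excess K s"
  unfolding excess_def trace_quad_def by (intro sum_nonneg input_weight_nonneg[OF psd_Ps])

lemma input_weight_Ps_le:
  assumes nB: "specnorm B \<le> U" and nP: "specnorm Ps \<le> U"
  shows "z \<bullet> (input_weight Ps *v z) \<le> (specnorm R + U^3) * (norm z)^2"
proof -
  have "z \<bullet> (input_weight Ps *v z) = z \<bullet> (R *v z) + V (B *v z)"
    by (simp add: input_weight_quadratic_form V_def)
  also have "z \<bullet> (R *v z) \<le> specnorm R * (norm z)^2" by (rule quadratic_form_le_specnorm)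
  also have "V (B *v z) \<le> specnorm Ps * (norm (B *v z))^2" by (rule V_le_specnorm)
  also have "\<dots> \<le> U * (U^2 * (norm z)^2)"
  proof (rule mult_mono)
    show "(norm (B *v z))^2 \<le> U^2 * (norm z)^2"
      by (rule norm_mv_sq_le_of_specnorm_le[OF nB])
  qed (use nP specnorm_Ps_ge_1 in auto)
  finally show ?thesis by (simp add: algebra_simps power2_eq_square power3_eq_cube)
qed

lemma excess_le:
  fixes K :: "real^'n^'m"
  assumes nB: "specnorm B \<le> U" and nP: "specnorm Ps \<le> U"
    and dK: "\<And>x. (norm ((K - Ks) *v x))^2 \<le> c1 * (norm x)^2"
    and decay: "\<And>x. (norm (matpow (A - B ** K) s *v x))^2 \<le> c2 * (norm x)^2"
    and c1: "c1 \<ge> 0"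
  shows "excess K s \<le> (specnorm R + U^3) * (real CARD('m) * (c1 * c2))"
proof -
  define Z where "Z = (K - Ks) ** matpow (A - B ** K) s"
  have Z: "(norm (Z *v x))^2 \<le> (c1 * c2) * (norm x)^2" for x
  proof -
    have "(norm (Z *v x))^2 \<le> c1 * (norm (matpow (A - B ** K) s *v x))^2"
      using dK by (simp add: Z_def matrix_vector_mul_assoc[symmetric])
    also have "\<dots> \<le> c1 * (c2 * (norm x)^2)" using decay c1 by (intro mult_left_mono)
    finally show ?thesis by (simp add: mult_ac)
  qed
  have "excess K s \<le> (\<Sum>i\<in>UNIV. (specnorm R + U^3) * (norm (Z *v axis i 1))^2)"
    unfolding excess_def trace_quad_def Z_def[symmetric]
    by (rule sum_mono) (rule input_weight_Ps_le[OF nB nP])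
  also have "\<dots> = (specnorm R + U^3) * (\<Sum>j\<in>UNIV. (norm (transpose Z *v axis j 1))^2)"
    unfolding sum_distrib_left[symmetric] by (rule arg_cong[OF sum_norm_mv_axis_transpose])
  also have "\<dots> \<le> (specnorm R + U^3) * (\<Sum>j\<in>(UNIV::'m set). c1 * c2)"
  proof (intro mult_left_mono sum_mono)
    show "(norm (transpose Z *v axis j 1))^2 \<le> c1 * c2" for j :: 'm
      using norm_transpose_mv_sq_le[OF Z, of "axis j 1"] by simp
  qed (use specnorm_nonneg[of R] nP specnorm_Ps_ge_1 in \<open>smt (verit) one_le_power\<close>)
  finally show ?thesis by simp
qed

text \<open>
  Telescoping against \<open>V\<close>: by completion of squares the stage cost of \<open>K\<close> is
  \<open>V x - V (L x)\<close> plus the excess term, and \<open>\<Sum>\<^sub>s tr(L\<^sup>s\<^sup>T P\<^sub>\<star> L\<^sup>s - L\<^sup>s\<^sup>+\<^sup>1\<^sup>T P\<^sub>\<star> L\<^sup>s\<^sup>+\<^sup>1) = tr P\<^sub>\<star>\<close>.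
\<close>

lemma stage_cost_series_sums:
  fixes K :: "real^'n^'m"
  assumes \<rho>: "0 \<le> \<rho>" "\<rho> < 1" and dec: "\<And>x. V ((A - B ** K) *v x) \<le> \<rho> * V x"
    and summable: "summable (excess K)"
  shows "(\<lambda>s. trace_quad (Q + transpose K ** R ** K) (matpow (A - B ** K) s))
    sums (trace_quad Ps (mat 1) + suminf (excess K))"
proof -
  define L where "L = A - B ** K"
  define f where "f s = trace_quad Ps (matpow L s)" for s
  have stage: "y \<bullet> ((Q + transpose K ** R ** K) *v y)
      = V y - V (L *v y) + ((K - Ks) *v y) \<bullet> (input_weight Ps *v ((K - Ks) *v y))" for y
    using riccati_completion_of_squares_gain[OF psd_Ps, of y K]
    unfolding riccati_Ps L_def V_def
    by (simp add: matrix_vector_mult_add_rdistrib matrix_vector_mul_assoc[symmetric]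
        inner_add_right inner_transpose_mv)
  have telescope: "trace_quad (Q + transpose K ** R ** K) (matpow L s) = f s - f (Suc s) + excess K s"
    for s
  proof -
    have "trace_quad (Q + transpose K ** R ** K) (matpow L s)
        = (\<Sum>i\<in>UNIV. V (matpow L s *v axis i 1) - V (L *v (matpow L s *v axis i 1))
            + ((K - Ks) *v (matpow L s *v axis i 1))
              \<bullet> (input_weight Ps *v ((K - Ks) *v (matpow L s *v axis i 1))))"
      unfolding trace_quad_def by (simp only: stage)
    also have "\<dots> = f s - f (Suc s) + excess K s"
      by (simp only: sum.distrib sum_subtractf f_def excess_def trace_quad_def V_def
          L_def[symmetric] matpow.simps matrix_vector_mul_assoc[symmetric])
    finally show ?thesis .
  qed
  have "\<bar>f s\<bar> \<le> real CARD('n) * (specnorm Ps * (specnorm Ps * \<rho>^s))" for s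
    unfolding f_def L_def
    using matpow_closed_loop_decay[OF dec \<rho>(1)] by (intro abs_trace_quad_le) (simp only: mult.assoc)
  then have "norm (f s) \<le> (real CARD('n) * (specnorm Ps * specnorm Ps)) * \<rho>^s" for s
    by (simp add: mult_ac)
  moreover have "(\<lambda>s. (real CARD('n) * (specnorm Ps * specnorm Ps)) * \<rho>^s) \<longlonglongrightarrow> 0"
    by (rule tendsto_mult_right_zero, rule LIMSEQ_power_zero) (use \<rho> in simp)
  ultimately have "f \<longlonglongrightarrow> 0" by (intro Lim_null_comparison[of f]) auto
  then have "(\<lambda>s. f s - f (Suc s) + excess K s) sums (f 0 - 0 + suminf (excess K))"
    by (intro sums_add telescope_sums' summable_sums summable)
  then have "(\<lambda>s. trace_quad (Q + transpose K ** R ** K) (matpow L s)) sums (f 0 + suminf (excess K))"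
    by (simp only: telescope diff_zero)
  then show ?thesis by (simp add: f_def L_def)
qed

lemma lqr_cost_eq_excess:
  fixes K :: "real^'n^'m"
  assumes noise: "noise_model M sw sx x0 w"
    and \<rho>: "0 \<le> \<rho>" "\<rho> < 1" and dec: "\<And>x. V ((A - B ** K) *v x) \<le> \<rho> * V x"
    and summable: "summable (excess K)"
  shows "lqr_cost M A B Q R x0 w K = sw^2 * (trace_quad Ps (mat 1) + suminf (excess K))"
proof -
  have "lqr_cost M A B Q R x0 w K
      = sw^2 * (\<Sum>s. trace_quad (Q + transpose K ** R ** K) (matpow (A - B ** K) s))"
    by (rule lqr_cost_eq_suminf(2)[OF noise \<rho> matpow_closed_loop_decay[OF dec \<rho>(1)]])
  also have "(\<Sum>s. trace_quad (Q + transpose K ** R ** K) (matpow (A - B ** K) s))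
      = trace_quad Ps (mat 1) + suminf (excess K)"
    by (rule sums_unique[OF stage_cost_series_sums[OF \<rho> dec summable], symmetric])
  finally show ?thesis .
qed

lemma lqr_cost_optimal: "noise_model M sw sx x0 w \<Longrightarrow> lqr_cost M A B Q R x0 w Ks = sw^2 * trace_quad Ps (mat 1)"
proof -
  assume noise: "noise_model M sw sx x0 w"
  define \<rho> where "\<rho> = 1 - 1 / (2 * specnorm Ps)"
  have \<rho>: "0 \<le> \<rho>" "\<rho> < 1" using specnorm_Ps_ge_1 by (auto simp: \<rho>_def field_simps)
  have "excess Ks = (\<lambda>s. 0)" using excess_optimal by blast
  then show ?thesis
    using lqr_cost_eq_excess[OF noise \<rho>, of Ks] V_optimal_contraction by (simp add: \<rho>_def)
qed

lemma excess_summable_le: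
  fixes K :: "real^'n^'m"
  assumes nB: "specnorm B \<le> U" and nP: "specnorm Ps \<le> U"
    and dK: "\<And>x. (norm ((K - Ks) *v x))^2 \<le> c1 * (norm x)^2" and c1: "0 \<le> c1"
    and dec: "\<And>x. V ((A - B ** K) *v x) \<le> \<rho> * V x" and \<rho>: "0 \<le> \<rho>" "\<rho> < 1"
  defines "c \<equiv> (specnorm R + U^3) * (real CARD('m) * (c1 * specnorm Ps))"
  shows "summable (excess K)" and "suminf (excess K) \<le> c / (1 - \<rho>)"
proof -
  have bound: "excess K s \<le> c * \<rho>^s" for s
    using excess_le[OF nB nP dK matpow_closed_loop_decay[OF dec \<rho>(1)] c1]
    by (simp add: c_def mult_ac)
  have "(\<lambda>s. c * \<rho>^s) sums (c * (1 / (1 - \<rho>)))"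
    using \<rho> by (intro sums_mult geometric_sums) simp
  then have geometric: "(\<lambda>s. c * \<rho>^s) sums (c / (1 - \<rho>))" by simp
  show summable: "summable (excess K)"
    by (rule summable_comparison_test[OF _ sums_summable[OF geometric]])
      (use bound excess_nonneg in auto)
  show "suminf (excess K) \<le> c / (1 - \<rho>)"
    by (rule sums_le[OF bound summable_sums[OF summable] geometric])
qed

lemma lqr_cost_gap_le:
  assumes noise: "noise_model M sw sx x0 w"
    and F: "psd F" and \<eta>: "0 \<le> \<eta>" and err: "\<And>x. norm ((F - Ps) *v x) \<le> \<eta> * norm x"
    and nB: "specnorm B \<le> U" and nP: "specnorm Ps \<le> U"
    and small: "\<eta> \<le> smin R / (40 * U^4 * (specnorm Ps * sqrt (specnorm Ps)))"
  shows "schur_stable (A - B ** gain F)"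
    and "lqr_cost M A B Q R x0 w (gain F) - lqr_cost M A B Q R x0 w Ks
      \<le> 32 * real CARD('m) * sw^2 * U^4 * (sqrt (specnorm Ps) + 1)^2 * specnorm Ps
        * (specnorm R + U^3) * \<eta>^2"
proof -
  define P where "P = specnorm Ps"
  define \<rho> where "\<rho> = 1 - 1 / (2 * P)"
  have P1: "1 \<le> P" using specnorm_Ps_ge_1 by (simp add: P_def)
  have \<rho>: "0 \<le> \<rho>" "\<rho> < 1" using P1 by (auto simp: \<rho>_def field_simps)
  have dec: "\<And>x. V ((A - B ** gain F) *v x) \<le> \<rho> * V x"
    using V_perturbed_decrease[OF F \<eta> err nB nP small] by (simp add: \<rho>_def P_def)
  show "schur_stable (A - B ** gain F)"
    using Ps_sym norm_sq_le_V dec \<rho>(2) unfolding V_def by (rule schur_stable_of_lyapunov)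
  have "(\<eta> / smin R)^2 \<le> \<eta>^2"
    using smin_ge_1[OF R_ge] \<eta> by (simp add: power_divide divide_le_eq mult_le_cancel_left1
        power_increasing[of 1 2 "smin R", simplified] mult_left_le)
  then have weaken: "U^2 * (\<eta> / smin R)^2 * P * (norm x)^2 \<le> U^2 * \<eta>^2 * P * (norm x)^2" for x
    using P1 by (intro mult_right_mono mult_left_mono) auto
  have dK: "(norm ((gain F - Ks) *v x))^2 \<le> (U^2 * \<eta>^2 * P) * (norm x)^2" for x
    using norm_gain_minus_optimal_sq_le[OF F \<eta> err nB, of x] weaken[of x]
    unfolding P_def by linarith
  have "0 \<le> U^2 * \<eta>^2 * P" using P1 by simp
  note excess = excess_summable_le[OF nB nP dK this dec \<rho>]
  have "lqr_cost M A B Q R x0 w (gain F) - lqr_cost M A B Q R x0 w Ks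
      = sw^2 * suminf (excess (gain F))"
    using lqr_cost_eq_excess[OF noise \<rho> dec excess(1)] lqr_cost_optimal[OF noise]
    by (simp add: algebra_simps)
  also have "\<dots> \<le> sw^2 * ((specnorm R + U^3) * (real CARD('m) * (U^2 * \<eta>^2 * P * P)) * (2 * P))"
    using excess(2) P1 by (intro mult_left_mono) (simp_all add: \<rho>_def P_def)
  also have "\<dots> \<le> 32 * real CARD('m) * sw^2 * U^4 * (sqrt P + 1)^2 * P * (specnorm R + U^3) * \<eta>^2"
    using P1 nP specnorm_nonneg[of R] by (intro cost_gap_constant_le) (auto simp: P_def)
  finally show "lqr_cost M A B Q R x0 w (gain F) - lqr_cost M A B Q R x0 w Ks
      \<le> 32 * real CARD('m) * sw^2 * U^4 * (sqrt (specnorm Ps) + 1)^2 * specnorm Ps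
        * (specnorm R + U^3) * \<eta>^2"
    by (simp add: P_def)
qed

end

theorem theorem1:
  fixes As Ps P Q :: "real^'n^'n" and Bs :: "real^'m^'n" and R :: "real^'m^'m"
    and Kmpc Ks :: "real^'n^'m"
    and M :: "'a measure" and x0 :: "'a \<Rightarrow> real^'n" and w :: "nat \<Rightarrow> 'a \<Rightarrow> real^'n"
    and sw sx Ups em ep beta :: real and N :: nat
  assumes noise: "noise_model M sw sx x0 w"
    and mn: "CARD('m) \<le> CARD('n)"
    and Rpd: "pd R" and RI: "psd (R - mat 1)"
    and Qpsd: "psd Q" and QI: "psd (Q - mat 1)"
    and stab: "stabilizable As Bs"
    and Ps_pd: "pd Ps" and Ps_fix: "Ps = riccati As Bs Q R Ps"
    and Ks_def: "Ks = gainK As Bs R Ps"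
    and beta_def: "beta = specnorm Ps / smin Q"
    and em: "em \<ge> 0" and Ups: "Ups \<ge> max 1 em"
    and nA: "specnorm As \<le> Ups" and nB: "specnorm Bs \<le> Ups" and nP: "specnorm Ps \<le> Ups"
    and N: "N \<ge> 1"
    and P: "psd P" and Perr: "specnorm (P - Ps) \<le> ep"
    and Kmpc_def: "Kmpc = gainK As Bs R ((riccati As Bs Q R ^^ (N - 1)) P)"
    and c1: "Ups \<ge> beta * (1 - 1 / beta) ^ (N - 1) * ep"
    and c2: "em + beta * (1 - 1 / beta) ^ (N - 1) * ep
               \<le> smin R / (40 * Ups ^ 4 * specnorm Ps powr (3 / 2))"
  shows "schur_stable (As - Bs ** Kmpc) \<and>
    lqr_cost M As Bs Q R x0 w Kmpc - lqr_cost M As Bs Q R x0 w Ks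
      \<le> 32 * real CARD('m) * sw ^ 2 * Ups ^ 4 * (sqrt (specnorm Ps) + 1) ^ 2 * specnorm Ps
         * (specnorm R + Ups ^ 3) * beta ^ 2 * (1 - 1 / beta) ^ (2 * (N - 1)) * ep ^ 2"
proof -
  interpret lq_solution As Bs Q R Ps
    using Rpd Qpsd quadratic_form_ge_of_psd_minus_mat_1[OF RI] quadratic_form_ge_of_psd_minus_mat_1[OF QI]
      psd_if_pd[OF Ps_pd] Ps_fix
    by unfold_locales (auto simp: pd_def psd_def)
  define \<eta> where "\<eta> = beta * (1 - 1 / beta) ^ (N - 1) * ep"
  define F where "F = (riccati As Bs Q R ^^ (N - 1)) P"
  have F: "psd F" and \<eta>: "0 \<le> \<eta>" and err: "\<And>x. norm ((F - Ps) *v x) \<le> \<eta> * norm x"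
    using riccati_iterate_error[OF P Perr] by (simp_all add: F_def \<eta>_def beta_def)
  have powr: "specnorm Ps powr (3 / 2) = specnorm Ps * sqrt (specnorm Ps)"
    by (rule powr_three_halves[OF specnorm_nonneg])
  have "\<eta> \<le> smin R / (40 * Ups^4 * (specnorm Ps * sqrt (specnorm Ps)))"
    using c2 em unfolding powr \<eta>_def by linarith
  note gap = lqr_cost_gap_le[OF noise F \<eta> err nB nP this]
  have "\<eta>^2 = beta ^ 2 * (1 - 1 / beta) ^ (2 * (N - 1)) * ep ^ 2"
    by (simp add: \<eta>_def power_mult_distrib power_mult[symmetric] mult.commute[of 2])
  then have target: "32 * real CARD('m) * sw ^ 2 * Ups ^ 4 * (sqrt (specnorm Ps) + 1) ^ 2 * specnorm Ps
      * (specnorm R + Ups ^ 3) * beta ^ 2 * (1 - 1 / beta) ^ (2 * (N - 1)) * ep ^ 2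
    = 32 * real CARD('m) * sw^2 * Ups^4 * (sqrt (specnorm Ps) + 1)^2 * specnorm Ps
      * (specnorm R + Ups^3) * \<eta>^2"
    by (simp only: mult.assoc)
  have Kmpc: "Kmpc = gain F" by (simp add: Kmpc_def F_def)
  show ?thesis unfolding Kmpc Ks_def target using gap by (rule conjI)
qed

end
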